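(* Fix an equation $(f,q,w)$ as in the context and let $\xi:=\arctan(-1/f_0)+\pi$ if $f_0>0$ and $\xi:=\arctan(-1/f_0)$ if $f_0<0$ (so $\xi\in(0,\pi)$). For $\alpha\in[0,\pi)$, $\beta\in(0,\pi]$ let $\mathbf S_{\alpha,\beta}$ be the separated self-adjoint boundary condition $\cos\alpha\,y_0-\sin\alpha\,f_0\Delta y_0=0$, $\cos\beta\,y_N-\sin\beta\,f_N\Delta y_N=0$, and write $\lambda_n(\alpha,\beta)$ for the $n$-th eigenvalue of the problem with this boundary condition. Then the problem with $\mathbf S_{\alpha,\beta}$ has exactly $N$ eigenvalues if $\alpha\neq\xi$ and $\beta\neq\pi$; exactly $N-1$ eigenvalues if either $\alpha\neq\xi,\ \beta=\pi$ or $\alpha=\xi,\ \beta\neq\pi$; and exactly $N-2$ eigenvalues if $\alpha=\xi$ and $\beta=\pi$. Moreover, for any $0\le\alpha_1<\alpha_2<\xi\le\alpha_3<\alpha_4<\pi$ and $0<\beta_1<\beta_2\le\pi$: (i) for every $\beta_0\in(0,\pi)$: for each $0\le n\le N-2$, $\lambda_n(\alpha_2,\beta_0)<\lambda_n(\alpha_1,\beta_0)<\lambda_n(\alpha_4,\beta_0)<\lambda_n(\alpha_3,\beta_0)<\lambda_{n+1}(\alpha_2,\beta_0)$, and $\lambda_{N-1}(\alpha_2,\beta_0)<\lambda_{N-1}(\alpha_1,\beta_0)<\lambda_{N-1}(\alpha_4,\beta_0)$; in addition $\lambda_{N-1}(\alpha_4,\beta_0)<\lambda_{N-1}(\alpha_3,\beta_0)$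 if $\alpha_3\neq\xi$; (ii) for $\beta_0=\pi$: for each $0\le n\le N-3$, $\lambda_n(\alpha_2,\pi)<\lambda_n(\alpha_1,\pi)<\lambda_n(\alpha_4,\pi)<\lambda_n(\alpha_3,\pi)<\lambda_{n+1}(\alpha_2,\pi)$, and $\lambda_{N-2}(\alpha_2,\pi)<\lambda_{N-2}(\alpha_1,\pi)<\lambda_{N-2}(\alpha_4,\pi)$; in addition $\lambda_{N-2}(\alpha_4,\pi)<\lambda_{N-2}(\alpha_3,\pi)$ if $\alpha_3\neq\xi$; (iii) for every $\alpha_0\in[0,\xi)\cup(\xi,\pi)$: for each $0\le n\le N-2$, $\lambda_n(\alpha_0,\beta_1)<\lambda_n(\alpha_0,\beta_2)<\lambda_{n+1}(\alpha_0,\beta_1)$; in addition $\lambda_{N-1}(\alpha_0,\beta_1)<\lambda_{N-1}(\alpha_0,\beta_2)$ if $\beta_2\neq\pi$; (iv) for $\alpha_0=\xi$: for each $0\le n\le N-3$, $\lambda_n(\xi,\beta_1)<\lambda_n(\xi,\beta_2)<\lambda_{n+1}(\xi,\beta_1)$; in addition $\lambda_{N-2}(\xi,\beta_1)<\lambda_{N-2}(\xi,\beta_2)$ if $\beta_2\neq\pi$.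
   Context: Let $N\ge2$ be an integer. An equation is given by real sequences $f=\{f_n\}_{n=0}^N$, $q=\{q_n\}_{n=1}^N$, $w=\{w_n\}_{n=1}^N$ with $f_n\neq0$ for $0\le n\le N$ and $w_n>0$ for $1\le n\le N$; it is the discrete Sturm–Liouville equation $-\nabla(f_n\Delta y_n)+q_ny_n=\lambda w_ny_n$, $1\le n\le N$, for $y=\{y_n\}_{n=0}^{N+1}$, where $\Delta y_n=y_{n+1}-y_n$, $\nabla y_n=y_n-y_{n-1}$. A boundary condition $[A\,|\,B]$ is $A(y_0,f_0\Delta y_0)^T+B(y_N,f_N\Delta y_N)^T=0$ with complex $2\times2$ matrices $A,B$, $\mathrm{rank}(A,B)=2$; two $2\times4$ matrices $(A,B)$ define the same boundary condition iff they differ by left multiplication by an invertible complex $2\times2$ matrix. It is self-adjoint if $AJA^*=BJB^*$, $J=\begin{pmatrix}0&1\\-1&0\end{pmatrix}$. $\lambda\in\mathbb C$ is an eigenvalue of the problem (equation plus boundary condition) if there is a nontrivial solution. For self-adjoint boundary conditions all eigenvalues are real and finitely many; the multiplicity of an eigenvalue is the dimension of its solution space (it equals its multiplicity as a zero of the characteristic polynomial). The eigenvalues counted with multiplicity number $k$ with $N-2\le k\le N$ ("exactly $k$ eigenvalues") and are ordered $\lambda_0\le\lambda_1\le\cdots\le\lambda_{k-1}$; $\lambda_n$ is the $n$-th eigenvalue. *)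

theory Defs
  imports "HOL-Analysis.Analysis" "HOL-Library.Function_Algebras"
begin

text \<open>Sequences y = (y_0,...,y_{N+1}) are represented as functions nat => complex
  that vanish beyond index N+1.  Coefficients f (indices 0..N), q, w (indices 1..N) are
  real functions on nat; values outside the index ranges are irrelevant.\<close>

definition fwd_diff :: "(nat \<Rightarrow> complex) \<Rightarrow> nat \<Rightarrow> complex" where
  "fwd_diff y n = y (Suc n) - y n"

definition sl_eq ::
  "(nat \<Rightarrow> real) \<Rightarrow> (nat \<Rightarrow> real) \<Rightarrow> (nat \<Rightarrow> real) \<Rightarrow> nat \<Rightarrow> complex \<Rightarrow> (nat \<Rightarrow> complex) \<Rightarrow> bool" where
  "sl_eq f q w N lam y \<longleftrightarrow>
     (\<forall>n\<in>{1..N}.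
        - (of_real (f n) * fwd_diff y n - of_real (f (n - 1)) * fwd_diff y (n - 1))
        + of_real (q n) * y n = lam * of_real (w n) * y n)"

text \<open>Boundary condition [A|B]: A (y_0, f_0 Delta y_0)^T + B (y_N, f_N Delta y_N)^T = 0.\<close>
definition sl_bc ::
  "(nat \<Rightarrow> real) \<Rightarrow> nat \<Rightarrow> complex^2^2 \<Rightarrow> complex^2^2 \<Rightarrow> (nat \<Rightarrow> complex) \<Rightarrow> bool" where
  "sl_bc f N A B y \<longleftrightarrow>
     (\<forall>i::2. A$i$1 * y 0 + A$i$2 * (of_real (f 0) * fwd_diff y 0)
            + B$i$1 * y N + B$i$2 * (of_real (f N) * fwd_diff y N) = 0)"

definition sl_solutions ::
  "(nat \<Rightarrow> real) \<Rightarrow> (nat \<Rightarrow> real) \<Rightarrow> (nat \<Rightarrow> real) \<Rightarrow> nat \<Rightarrow> complex^2^2 \<Rightarrow> complex^2^2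
    \<Rightarrow> complex \<Rightarrow> (nat \<Rightarrow> complex) set" where
  "sl_solutions f q w N A B lam =
     {y. (\<forall>n>N+1. y n = 0) \<and> sl_eq f q w N lam y \<and> sl_bc f N A B y}"

definition sl_is_eigenvalue ::
  "(nat \<Rightarrow> real) \<Rightarrow> (nat \<Rightarrow> real) \<Rightarrow> (nat \<Rightarrow> real) \<Rightarrow> nat \<Rightarrow> complex^2^2 \<Rightarrow> complex^2^2
    \<Rightarrow> complex \<Rightarrow> bool" where
  "sl_is_eigenvalue f q w N A B lam \<longleftrightarrow> (\<exists>y\<in>sl_solutions f q w N A B lam. y \<noteq> 0)"

definition sl_mult ::
  "(nat \<Rightarrow> real) \<Rightarrow> (nat \<Rightarrow> real) \<Rightarrow> (nat \<Rightarrow> real) \<Rightarrow> nat \<Rightarrow> complex^2^2 \<Rightarrow> complex^2^2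
    \<Rightarrow> complex \<Rightarrow> nat" where
  "sl_mult f q w N A B lam =
     vector_space.dim (\<lambda>(c::complex) (y::nat \<Rightarrow> complex). (\<lambda>n. c * y n))
       (sl_solutions f q w N A B lam)"

definition sl_num_eigenvalues_is ::
  "(nat \<Rightarrow> real) \<Rightarrow> (nat \<Rightarrow> real) \<Rightarrow> (nat \<Rightarrow> real) \<Rightarrow> nat \<Rightarrow> complex^2^2 \<Rightarrow> complex^2^2
    \<Rightarrow> nat \<Rightarrow> bool" where
  "sl_num_eigenvalues_is f q w N A B k \<longleftrightarrow>
     finite {lam. sl_is_eigenvalue f q w N A B lam} \<and>
     (\<Sum>lam\<in>{lam. sl_is_eigenvalue f q w N A B lam}. sl_mult f q w N A B lam) = k"

text \<open>The n-th eigenvalue: n-th entry (from 0) of the nondecreasing list of the (real)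
  eigenvalues, each repeated according to its multiplicity.  (For self-adjoint boundary
  conditions all eigenvalues are real.)\<close>
definition sl_eig ::
  "(nat \<Rightarrow> real) \<Rightarrow> (nat \<Rightarrow> real) \<Rightarrow> (nat \<Rightarrow> real) \<Rightarrow> nat \<Rightarrow> complex^2^2 \<Rightarrow> complex^2^2
    \<Rightarrow> nat \<Rightarrow> real" where
  "sl_eig f q w N A B n =
     concat (map (\<lambda>x. replicate (sl_mult f q w N A B (of_real x)) x)
       (sorted_list_of_set {x::real. sl_is_eigenvalue f q w N A B (of_real x)})) ! n"

text \<open>Separated boundary condition S_{alpha,beta}:
  cos alpha y_0 - sin alpha f_0 Delta y_0 = 0, cos beta y_N - sin beta f_N Delta y_N = 0.\<close>
definition S_A :: "real \<Rightarrow> complex^2^2" where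
  "S_A \<alpha> = (\<chi> i j. if i = 1 then (if j = 1 then of_real (cos \<alpha>) else - of_real (sin \<alpha>)) else 0)"

definition S_B :: "real \<Rightarrow> complex^2^2" where
  "S_B \<beta> = (\<chi> i j. if i = 2 then (if j = 1 then of_real (cos \<beta>) else - of_real (sin \<beta>)) else 0)"

definition xi_of :: "real \<Rightarrow> real" where
  "xi_of f0 = (if f0 > 0 then arctan (-1 / f0) + pi else arctan (-1 / f0))"

end

theory Submission
  imports Defs "HOL-Computational_Algebra.Fundamental_Theorem_Algebra"
begin

text \<open>
  For the boundary condition \<open>S\<^sub>\<alpha>\<^sub>,\<^sub>\<beta>\<close>, every solution is a multiple of the solution \<open>y(\<lambda>)\<close>
  with \<open>(y\<^sub>0, f\<^sub>0 \<Delta>y\<^sub>0) = (sin \<alpha>, cos \<alpha>)\<close>, so the eigenvalues are the roots of the characteristic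
  polynomial \<open>\<chi>\<^sub>\<alpha>\<^sub>,\<^sub>\<beta>(\<lambda>) = cos \<beta> y\<^sub>N(\<lambda>) - sin \<beta> f\<^sub>N \<Delta>y\<^sub>N(\<lambda>)\<close>, each of multiplicity one. Its degree
  is \<open>N\<close>, minus one if \<open>sin \<beta> = 0\<close> and minus one if \<open>y\<^sub>1 = sin \<alpha> + cos \<alpha> / f\<^sub>0\<close> vanishes,
  i.e. if \<open>\<alpha> = \<xi>\<close>.

  Lagrange's identity does the rest. Applied to \<open>\<lambda>\<close> and \<open>cnj \<lambda>\<close> it shows that the roots are real.
  Applied to two characteristic polynomials \<open>G\<close>, \<open>H\<close> that differ only in \<open>\<beta>\<close> (or only in \<open>\<alpha>\<close>)
  it gives \<open>G(x) H(y) - G(y) H(x) = (x - y) sin \<delta> K(x, y)\<close>, where \<open>\<delta>\<close> is the difference of the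
  angles and \<open>K(x, x)\<close> is a positive weighted sum of squares, so the Wronskian \<open>G' H - G H'\<close>
  has the sign of \<open>sin \<delta>\<close>. Hence the roots are simple (there are as many eigenvalues as the
  degree), the roots of \<open>G\<close> and \<open>H\<close> interlace, and the signs of the leading coefficients decide
  which of the two owns the largest root. Comparing the sorted root lists gives (i)--(iv).
\<close>

section \<open>Interlacing of finite ordered sets\<close>

definition separates :: "'a::linorder set \<Rightarrow> 'a set \<Rightarrow> bool" where
  "separates X Y \<longleftrightarrow> (\<forall>a\<in>Y. \<forall>b\<in>Y. a < b \<longrightarrow> (\<exists>x\<in>X. a < x \<and> x < b))"

lemma separates_subset:
  "separates X Y \<Longrightarrow> Y' \<subseteq> Y \<Longrightarrow> (\<And>a b x. a \<in> Y' \<Longrightarrow> b \<in> Y' \<Longrightarrow> x \<in> X \<Longrightarrow> a < x \<Longrightarrow> x < b \<Longrightarrow> x \<in> X')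
   \<Longrightarrow> separates X' Y'"
  unfolding separates_def by (meson subsetD)

lemma card_le_Suc_card_if_separates:
  fixes X Y :: "'a::linorder set"
  assumes "finite X" "finite Y" "separates X Y"
  shows "card Y \<le> card X + 1"
proof -
  define ys where "ys = sorted_list_of_set Y"
  have ys: "sorted_wrt (<) ys" "set ys = Y" "length ys = card Y"
    using assms(2) by (simp_all add: ys_def)
  define k where "k = card Y - 1"
  have "\<exists>x\<in>X. ys ! i < x \<and> x < ys ! Suc i" if "i < k" for i
  proof -
    have "Suc i < length ys" using that ys by (simp add: k_def)
    then show ?thesis
      using assms(3) ys unfolding separates_def by (metis lessI nth_mem sorted_wrt_nth_less Suc_lessD)
  qed
  then obtain g where g: "\<And>i. i < k \<Longrightarrow> g i \<in> X \<and> ys ! i < g i \<and> g i < ys ! Suc i"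
    by metis
  have "g i < g j" if "i < j" "j < k" for i j
  proof -
    have "ys ! Suc i \<le> ys ! j"
      using that ys by (cases "Suc i = j") (auto simp: k_def sorted_wrt_iff_nth_less less_imp_le)
    then show ?thesis using g[of i] g[of j] that by force
  qed
  then have "inj_on g {..<k}"
    by (metis inj_on_def lessThan_iff linorder_neqE_nat order_less_irrefl)
  moreover have "g ` {..<k} \<subseteq> X" using g by auto
  ultimately have "k \<le> card X"
    using card_inj_on_le[OF _ _ assms(1)] by fastforce
  then show ?thesis by (simp add: k_def)
qed

lemma card_atMost_part_le:
  fixes X Y :: "'a::linorder set"
  assumes "finite X" "finite Y" "separates X Y"
  shows "card {y\<in>Y. y \<le> t} \<le> card {x\<in>X. x \<le> t} + 1"
proof (rule card_le_Suc_card_if_separates)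
  show "separates {x\<in>X. x \<le> t} {y\<in>Y. y \<le> t}"
    using assms(3) by (rule separates_subset) auto
qed (use assms in auto)

lemma card_greaterThan_part_le:
  fixes X Y :: "'a::linorder set"
  assumes "finite X" "finite Y" "separates X Y"
  shows "card {y\<in>Y. t < y} \<le> card {x\<in>X. t < x} + 1"
proof (rule card_le_Suc_card_if_separates)
  show "separates {x\<in>X. t < x} {y\<in>Y. t < y}"
    using assms(3) by (rule separates_subset) auto
qed (use assms in auto)

lemma card_greaterThan_part_le_if_top:
  fixes X Y :: "'a::linorder set"
  assumes "finite X" "finite Y" "separates X Y" and z: "z \<in> X" "\<And>y. y \<in> Y \<Longrightarrow> y < z"
  shows "card {y\<in>Y. t < y} \<le> card {x\<in>X. t < x}"
proof (cases "\<exists>y\<in>Y. t < y")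
  case True
  have "card {y\<in>Y. t < y} \<le> card {x\<in>X. t < x \<and> x < z} + 1"
  proof (rule card_le_Suc_card_if_separates)
    show "separates {x\<in>X. t < x \<and> x < z} {y\<in>Y. t < y}"
      using assms(3) by (rule separates_subset) (use z in \<open>auto dest: order.strict_trans\<close>)
  qed (use assms in auto)
  also have "\<dots> = card (insert z {x\<in>X. t < x \<and> x < z})"
    using assms(1) by simp
  also have "\<dots> \<le> card {x\<in>X. t < x}"
    using True assms by (intro card_mono) (auto dest: order.strict_trans)
  finally show ?thesis .
next
  case False
  then have "{y\<in>Y. t < y} = {}" by auto
  then show ?thesis by (simp only: card.empty)
qed

lemma card_atMost_part:
  fixes X :: "'a::linorder set"
  assumes "finite X"
  shows "card {x\<in>X. x \<le> t} = card X - card {x\<in>X. t < x}"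
proof -
  have "X = {x\<in>X. x \<le> t} \<union> {x\<in>X. t < x}" by auto
  moreover have "{x\<in>X. x \<le> t} \<inter> {x\<in>X. t < x} = {}" by auto
  ultimately have "card X = card {x\<in>X. x \<le> t} + card {x\<in>X. t < x}"
    using assms card_Un_disjoint[of "{x\<in>X. x \<le> t}" "{x\<in>X. t < x}"] by simp
  then show ?thesis by simp
qed

lemma sorted_list_of_set_nth_le_iff:
  fixes X :: "'a::linorder set"
  assumes "finite X" "i < card X"
  shows "sorted_list_of_set X ! i \<le> t \<longleftrightarrow> i < card {x\<in>X. x \<le> t}"
proof -
  define xs where "xs = sorted_list_of_set X"
  define I where "I = {j. j < card X \<and> xs ! j \<le> t}"
  have xs: "sorted xs" "distinct xs" "set xs = X" "length xs = card X"
    using assms(1) by (simp_all add: xs_def)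
  have "{x\<in>X. x \<le> t} = nth xs ` I"
    using xs by (auto simp: I_def in_set_conv_nth)
  moreover have "inj_on (nth xs) I"
    using xs by (intro inj_on_subset[OF inj_on_nth[of xs "{..<card X}"]]) (auto simp: I_def)
  ultimately have card_I: "card {x\<in>X. x \<le> t} = card I"
    by (simp add: card_image)
  show ?thesis unfolding xs_def[symmetric]
  proof
    assume "xs ! i \<le> t"
    then have "{..i} \<subseteq> I"
      using assms(2) xs sorted_nth_mono[of xs _ i] by (fastforce simp: I_def)
    then have "Suc i \<le> card I" using card_mono[of I "{..i}"] by (auto simp: I_def)
    then show "i < card {x\<in>X. x \<le> t}" by (simp add: card_I)
  next
    assume i: "i < card {x\<in>X. x \<le> t}"
    show "xs ! i \<le> t"
    proof (rule ccontr)
      assume "\<not> xs ! i \<le> t"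
      then have "I \<subseteq> {..<i}"
        using xs by (auto simp: I_def not_less[symmetric] dest: sorted_nth_mono[of xs i])
      then have "card I \<le> i" using card_mono[of "{..<i}" I] by simp
      then show False using i card_I by simp
    qed
  qed
qed

lemma sorted_list_of_set_interlace:
  fixes X Y :: "'a::linorder set"
  assumes fin: "finite X" "finite Y" and disj: "X \<inter> Y = {}"
    and XY: "\<And>t. card {x\<in>X. x \<le> t} \<le> card {y\<in>Y. y \<le> t}"
    and YX: "\<And>t. card {y\<in>Y. y \<le> t} \<le> card {x\<in>X. x \<le> t} + 1"
  shows "i < card X \<Longrightarrow> i < card Y \<Longrightarrow> sorted_list_of_set Y ! i < sorted_list_of_set X ! i"
    and "i < card X \<Longrightarrow> Suc i < card Y \<Longrightarrow> sorted_list_of_set X ! i < sorted_list_of_set Y ! Suc i"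
proof -
  let ?xs = "sorted_list_of_set X" and ?ys = "sorted_list_of_set Y"
  have mem: "?xs ! i \<in> X" "?ys ! j \<in> Y" if "i < card X" "j < card Y" for i j
    using that fin by (metis length_sorted_list_of_set nth_mem set_sorted_list_of_set)+
  show "?ys ! i < ?xs ! i" if i: "i < card X" "i < card Y"
  proof -
    have "i < card {y\<in>Y. y \<le> ?xs ! i}"
      using sorted_list_of_set_nth_le_iff[OF fin(1) i(1)] XY order.strict_trans2 by blast
    then have "?ys ! i \<le> ?xs ! i"
      using sorted_list_of_set_nth_le_iff[OF fin(2) i(2)] by blast
    moreover have "?ys ! i \<noteq> ?xs ! i" using mem[OF i] disj by auto
    ultimately show ?thesis by simp
  qed
  show "?xs ! i < ?ys ! Suc i" if i: "i < card X" "Suc i < card Y"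
  proof -
    have "Suc i < card {y\<in>Y. y \<le> ?ys ! Suc i}"
      using sorted_list_of_set_nth_le_iff[OF fin(2) i(2)] by blast
    then have "i < card {x\<in>X. x \<le> ?ys ! Suc i}" using YX[of "?ys ! Suc i"] by linarith
    then have "?xs ! i \<le> ?ys ! Suc i"
      using sorted_list_of_set_nth_le_iff[OF fin(1) i(1)] by blast
    moreover have "?ys ! Suc i \<noteq> ?xs ! i" using mem[OF i] disj by auto
    ultimately show ?thesis by simp
  qed
qed

lemma sorted_list_of_set_interlace_same_card:
  fixes X Y :: "'a::linorder set"
  assumes fin: "finite X" "finite Y" and disj: "X \<inter> Y = {}"
    and sep: "separates X Y" and "card X = card Y"
    and top: "z \<in> X" "\<And>y. y \<in> Y \<Longrightarrow> y < z"
    and i: "i < card X"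
  shows "sorted_list_of_set Y ! i < sorted_list_of_set X ! i"
    and "Suc i < card X \<Longrightarrow> sorted_list_of_set X ! i < sorted_list_of_set Y ! Suc i"
proof -
  have "card {x\<in>X. x \<le> t} \<le> card {y\<in>Y. y \<le> t}" for t
    using card_greaterThan_part_le_if_top[OF fin sep top, of t] \<open>card X = card Y\<close>
    by (simp add: card_atMost_part fin)
  note interlace = sorted_list_of_set_interlace[OF fin disj this card_atMost_part_le[OF fin sep]]
  show "sorted_list_of_set Y ! i < sorted_list_of_set X ! i"
    using interlace(1) i \<open>card X = card Y\<close> by simp
  show "sorted_list_of_set X ! i < sorted_list_of_set Y ! Suc i" if "Suc i < card X"
    using interlace(2) i that \<open>card X = card Y\<close> by simp
qed

lemma sorted_list_of_set_interlace_Suc_card: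
  fixes X Y :: "'a::linorder set"
  assumes fin: "finite X" "finite Y" and disj: "X \<inter> Y = {}"
    and sep: "separates Y X" and "card X = card Y + 1"
    and i: "i < card Y"
  shows "sorted_list_of_set X ! i < sorted_list_of_set Y ! i"
    and "sorted_list_of_set Y ! i < sorted_list_of_set X ! Suc i"
proof -
  have "card {y\<in>Y. y \<le> t} \<le> card {x\<in>X. x \<le> t}" for t
    using card_greaterThan_part_le[OF fin(2,1) sep, of t] \<open>card X = card Y + 1\<close>
    by (simp add: card_atMost_part fin)
  note interlace = sorted_list_of_set_interlace[OF fin(2,1) _ this card_atMost_part_le[OF fin(2,1) sep]]
  show "sorted_list_of_set X ! i < sorted_list_of_set Y ! i"
    using interlace(1) i disj \<open>card X = card Y + 1\<close> by (simp add: Int_commute)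
  show "sorted_list_of_set Y ! i < sorted_list_of_set X ! Suc i"
    using interlace(2) i disj \<open>card X = card Y + 1\<close> by (simp add: Int_commute)
qed

section \<open>Real polynomials\<close>

abbreviation map_of_real :: "real poly \<Rightarrow> 'a::real_field poly" where
  "map_of_real p \<equiv> map_poly of_real p"

lemma map_of_real_add: "map_of_real (p + r) = (map_of_real p + map_of_real r :: 'a::real_field poly)"
  by (rule poly_eqI) (simp add: coeff_map_poly)

lemma map_of_real_diff: "map_of_real (p - r) = (map_of_real p - map_of_real r :: 'a::real_field poly)"
  by (rule poly_eqI) (simp add: coeff_map_poly)

lemma map_of_real_mult: "map_of_real (p * r) = (map_of_real p * map_of_real r :: 'a::real_field poly)"
  by (rule poly_eqI) (simp add: coeff_map_poly coeff_mult of_real_sum)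

lemma map_of_real_smult: "map_of_real (smult c p) = (smult (of_real c) (map_of_real p) :: 'a::real_field poly)"
  by (rule map_poly_smult) auto

lemma map_of_real_pCons: "map_of_real (pCons c p) = (pCons (of_real c) (map_of_real p) :: 'a::real_field poly)"
  by (rule map_poly_pCons) auto

lemma map_of_real_real [simp]: "(map_of_real p :: real poly) = p"
  by (rule poly_eqI) (simp add: coeff_map_poly)

lemma poly_map_of_real: "poly (map_of_real p) (of_real x) = (of_real (poly p x) :: 'a::real_field)"
  by (induction p) (auto simp: map_of_real_pCons)

lemma pderiv_map_of_real: "pderiv (map_of_real p) = (map_of_real (pderiv p) :: 'a::real_field poly)"
  by (rule poly_eqI) (simp add: coeff_map_poly coeff_pderiv)

lemma degree_map_of_real: "degree (map_of_real p :: 'a::real_field poly) = degree p"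
  by (rule degree_map_poly) auto

lemma degree_add_smult_dominant:
  fixes P Y :: "real poly"
  assumes "P \<noteq> 0" "Y = 0 \<or> degree Y < degree P" "c \<noteq> 0"
  shows "Y + smult c P \<noteq> 0 \<and> degree (Y + smult c P) = degree P"
proof -
  have "degree Y < degree (smult c P) \<or> Y = 0" using assms by auto
  then have "degree (Y + smult c P) = degree P \<and> lead_coeff (Y + smult c P) = c * lead_coeff P"
    using degree_add_eq_right[of Y "smult c P"] lead_coeff_add_le[of Y "smult c P"] assms(3)
    by (auto simp: lead_coeff_smult)
  then show ?thesis using assms by (metis leading_coeff_0_iff mult_eq_0_iff)
qed

lemma degree_add_linear_mult_dominant:
  fixes P Y :: "real poly"
  assumes "Y \<noteq> 0" "P = 0 \<or> degree P \<le> degree Y" "v \<noteq> 0"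
  shows "P + [:u, v:] * Y \<noteq> 0 \<and> degree (P + [:u, v:] * Y) = degree Y + 1"
proof -
  have d: "degree ([:u, v:] * Y) = degree Y + 1"
    using assms by (subst degree_mult_eq) auto
  then have "degree P < degree ([:u, v:] * Y)" using assms(2) by auto
  then show ?thesis
    using degree_add_eq_right[of P] d by (metis add_eq_0_iff_both_eq_0 degree_0 zero_neq_one)
qed

lemma degree_smult_diff_smult:
  fixes Y Q :: "real poly"
  assumes "Y \<noteq> 0" "degree Q = degree Y + 1" "c \<noteq> 0 \<or> s \<noteq> 0"
  shows "smult c Y - smult s Q \<noteq> 0"
    and "degree (smult c Y - smult s Q) = (if s = 0 then degree Y else degree Q)"
    and "lead_coeff (smult c Y - smult s Q) = (if s = 0 then c * lead_coeff Y else - s * lead_coeff Q)"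
proof -
  show deg_lc: "degree (smult c Y - smult s Q) = (if s = 0 then degree Y else degree Q)"
    "lead_coeff (smult c Y - smult s Q) = (if s = 0 then c * lead_coeff Y else - s * lead_coeff Q)"
  proof (atomize (full), cases "s = 0")
    case False
    have "degree (smult c Y) < degree (- smult s Q)" using assms False by simp
    then show "degree (smult c Y - smult s Q) = (if s = 0 then degree Y else degree Q) \<and>
      lead_coeff (smult c Y - smult s Q) = (if s = 0 then c * lead_coeff Y else - s * lead_coeff Q)"
      using degree_add_eq_right[of "smult c Y" "- smult s Q"] lead_coeff_add_le[of "smult c Y" "- smult s Q"] False
      by (simp add: lead_coeff_smult lead_coeff_minus)
  qed (use assms in \<open>simp add: lead_coeff_smult\<close>)
  have "Q \<noteq> 0" using assms(2) by auto
  then have "lead_coeff (smult c Y - smult s Q) \<noteq> 0"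
    unfolding deg_lc(2) using assms(1,3) by auto
  then show "smult c Y - smult s Q \<noteq> 0" by (metis leading_coeff_0_iff)
qed

lemma poly_lead_coeff_pos_if_no_root_above:
  fixes p :: "real poly"
  assumes "p \<noteq> 0" and no_root: "\<And>y. x \<le> y \<Longrightarrow> poly p y \<noteq> 0"
  shows "poly p x * lead_coeff p > 0"
proof -
  define s where "s = sgn (lead_coeff p)"
  have "lead_coeff p \<noteq> 0" using assms(1) by simp
  then have s: "s * s = 1" "s * lead_coeff p > 0"
    by (auto simp del: leading_coeff_0_iff simp: s_def sgn_if)
  have lc: "lead_coeff (smult s p) > 0" using s by (cases "s = 0") (simp_all add: lead_coeff_smult)
  then obtain M where M: "\<And>y. M \<le> y \<Longrightarrow> poly (smult s p) y \<ge> lead_coeff (smult s p)"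
    using poly_pinfty_gt_lc by blast
  have pos_M: "poly (smult s p) (max M (x + 1)) > 0"
    using M[of "max M (x + 1)"] lc by linarith
  have "poly (smult s p) x > 0"
  proof (rule ccontr)
    assume "\<not> ?thesis"
    then have "poly (smult s p) x < 0" using no_root[of x] s(1) by (auto simp: not_less order.order_iff_strict)
    then obtain y where "x < y" "poly (smult s p) y = 0"
      using poly_IVT_pos[OF _ _ pos_M, of x] by force
    then show False using no_root[of y] s(1) by auto
  qed
  then have "0 < (s * poly p x) * (s * lead_coeff p)"
    using s(2) by (simp add: mult_pos_pos)
  also have "\<dots> = (s * s) * (poly p x * lead_coeff p)" by (simp add: ac_simps)
  finally show ?thesis using s(1) by simp
qed

lemma pderiv_lead_coeff_nonneg_at_largest_root:
  fixes p :: "real poly"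
  assumes "poly p z = 0" and no_root: "\<And>y. z < y \<Longrightarrow> poly p y \<noteq> 0"
  shows "poly (pderiv p) z * lead_coeff p \<ge> 0"
proof -
  have "p \<noteq> 0" using no_root[of "z + 1"] by auto
  have deriv: "((\<lambda>y. (poly p y - poly p z) / (y - z)) \<longlongrightarrow> poly (pderiv p) z) (at z)"
    using poly_DERIV[of p z] by (simp add: has_field_derivative_iff)
  have "((\<lambda>y. (poly p y - poly p z) / (y - z) * lead_coeff p) \<longlongrightarrow> poly (pderiv p) z * lead_coeff p)
      (at_right z)"
    using tendsto_mono[OF at_le[OF subset_UNIV] deriv] by (rule tendsto_mult_right)
  moreover have "eventually (\<lambda>y. 0 \<le> (poly p y - poly p z) / (y - z) * lead_coeff p) (at_right z)"
    using eventually_at_right_less[of z]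
  proof (rule eventually_mono)
    fix y assume "z < y"
    then have "poly p y * lead_coeff p > 0"
      using poly_lead_coeff_pos_if_no_root_above[OF \<open>p \<noteq> 0\<close>] no_root by force
    then show "0 \<le> (poly p y - poly p z) / (y - z) * lead_coeff p"
      using \<open>z < y\<close> assms(1) by (simp add: field_simps order_less_imp_le)
  qed
  ultimately show ?thesis by (rule tendsto_lowerbound) simp
qed

lemma card_roots_eq_degree_if_real_simple:
  fixes p :: "real poly"
  assumes p: "p \<noteq> 0"
    and real: "\<And>z. poly (map_of_real p :: complex poly) z = 0 \<Longrightarrow> Im z = 0"
    and simple: "\<And>x. poly p x = 0 \<Longrightarrow> poly (pderiv p) x \<noteq> 0"
  shows "card {x. poly p x = 0} = degree p"
proof -
  let ?pc = "map_of_real p :: complex poly"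
  have roots: "{z. poly ?pc z = 0} = of_real ` {x. poly p x = 0}"
  proof (intro equalityI subsetI)
    fix z assume "z \<in> {z. poly ?pc z = 0}"
    moreover from this have "z = of_real (Re z)" using real by (simp add: complex_eq_iff)
    ultimately show "z \<in> of_real ` {x. poly p x = 0}"
      by (metis (mono_tags) image_eqI mem_Collect_eq of_real_eq_0_iff poly_map_of_real)
  qed (auto simp: poly_map_of_real)
  have "rsquarefree ?pc"
    unfolding rsquarefree_roots
  proof (intro allI notI)
    fix a assume "poly ?pc a = 0 \<and> poly (pderiv ?pc) a = 0"
    moreover obtain x where "a = of_real x" "poly p x = 0" using roots calculation by blast
    ultimately show False using simple by (simp add: pderiv_map_of_real poly_map_of_real)
  qed
  then have "degree ?pc = degree (smult (lead_coeff ?pc) (\<Prod>z|poly ?pc z = 0. [:-z, 1:]))"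
    using complex_poly_decompose_rsquarefree by simp
  also have "\<dots> = card {z. poly ?pc z = 0}"
    using p by (simp add: degree_prod_sum_eq map_poly_eq_0_iff)
  also have "\<dots> = card {x. poly p x = 0}"
    unfolding roots by (rule card_image) (simp add: inj_on_def)
  finally show ?thesis by (simp add: degree_map_of_real)
qed

section \<open>Pairs of polynomials with positive Wronskian\<close>

definition wronskian :: "'a::idom poly \<Rightarrow> 'a poly \<Rightarrow> 'a poly" where
  "wronskian G H = pderiv G * H - G * pderiv H"

lemma wronskian_swap: "wronskian H (- G) = wronskian G H"
  by (simp add: wronskian_def pderiv_minus algebra_simps)

lemma poly_wronskian_eq_kernel:
  fixes G H :: "real poly"
  assumes kernel: "\<And>y. poly G x * poly H y - poly G y * poly H x = (x - y) * T y"
    and "isCont T x"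
  shows "poly (wronskian G H) x = T x"
proof -
  have "((\<lambda>y. poly H x * ((poly G y - poly G x) / (y - x)) - poly G x * ((poly H y - poly H x) / (y - x)))
      \<longlongrightarrow> poly H x * poly (pderiv G) x - poly G x * poly (pderiv H) x) (at x)"
    using poly_DERIV[of G x] poly_DERIV[of H x] unfolding has_field_derivative_iff
    by (intro tendsto_diff tendsto_mult tendsto_const)
  then have "((\<lambda>y. poly H x * ((poly G y - poly G x) / (y - x)) - poly G x * ((poly H y - poly H x) / (y - x)))
      \<longlongrightarrow> poly (wronskian G H) x) (at x)"
    by (simp add: wronskian_def mult.commute)
  moreover have "eventually (\<lambda>y. poly H x * ((poly G y - poly G x) / (y - x))
      - poly G x * ((poly H y - poly H x) / (y - x)) = T y) (at x)"
    unfolding eventually_at_filter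
  proof (intro always_eventually allI impI)
    fix y assume "y \<noteq> x"
    have "poly H x * (poly G y - poly G x) - poly G x * (poly H y - poly H x) = (y - x) * T y"
      using kernel[of y] by (simp add: algebra_simps)
    then have "(poly H x * (poly G y - poly G x) - poly G x * (poly H y - poly H x)) / (y - x) = T y"
      using \<open>y \<noteq> x\<close> by simp
    then show "poly H x * ((poly G y - poly G x) / (y - x)) - poly G x * ((poly H y - poly H x) / (y - x)) = T y"
      by (simp only: times_divide_eq_right diff_divide_distrib[symmetric])
  qed
  ultimately have "(T \<longlongrightarrow> poly (wronskian G H) x) (at x)"
    by (rule Lim_transform_eventually)
  then show ?thesis
    using \<open>isCont T x\<close> by (metis LIM_unique isCont_def)
qed

locale positive_wronskian =
  fixes G H :: "real poly"
  assumes wronskian_pos: "\<And>x. poly (wronskian G H) x > 0"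
begin

lemma swap: "positive_wronskian H (- G)"
  using wronskian_pos by unfold_locales (simp add: wronskian_swap)

lemma nonzero: "G \<noteq> 0" "H \<noteq> 0"
  using wronskian_pos[of 0] by (auto simp: wronskian_def)

lemma no_common_root: "poly G x = 0 \<Longrightarrow> poly H x \<noteq> 0"
  using wronskian_pos[of x] by (auto simp: wronskian_def)

lemma root_simple: "poly G x = 0 \<Longrightarrow> poly (pderiv G) x \<noteq> 0"
  using wronskian_pos[of x] by (auto simp: wronskian_def)

text \<open>Where \<open>H\<close> has no zero, \<open>G / H\<close> has the positive derivative \<open>wronskian G H / H\<^sup>2\<close>, so it cannot
  vanish twice.\<close>
lemma root_between_roots:
  assumes "poly G a = 0" "poly G b = 0" "a < b"
  shows "\<exists>y. a < y \<and> y < b \<and> poly H y = 0"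
proof (rule ccontr)
  assume no_root: "\<not> ?thesis"
  have H: "poly H x \<noteq> 0" if "a \<le> x" "x \<le> b" for x
    using that no_root no_common_root assms by (cases "x = a \<or> x = b") (auto simp: order_le_less)
  have "poly G a / poly H a < poly G b / poly H b"
  proof (rule DERIV_pos_imp_increasing[OF \<open>a < b\<close>])
    fix x assume "a \<le> x" "x \<le> b"
    then have "((\<lambda>x. poly G x / poly H x) has_real_derivative
        poly (wronskian G H) x / (poly H x * poly H x)) (at x)"
      using DERIV_divide[OF poly_DERIV poly_DERIV H] by (simp add: wronskian_def)
    moreover have "0 < poly (wronskian G H) x / (poly H x * poly H x)"
      using wronskian_pos[of x] H[OF \<open>a \<le> x\<close> \<open>x \<le> b\<close>] not_real_square_gt_zero
      by (blast intro: divide_pos_pos)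
    ultimately show "\<exists>D. ((\<lambda>x. poly G x / poly H x) has_real_derivative D) (at x) \<and> 0 < D"
      by blast
  qed
  then show False using assms by simp
qed

lemma separates_roots: "separates {x. poly H x = 0} {x. poly G x = 0}"
  unfolding separates_def using root_between_roots by blast

lemma largest_root_lead_coeff_sign:
  assumes no_root: "\<And>y. z < y \<Longrightarrow> poly G y \<noteq> 0 \<and> poly H y \<noteq> 0"
  shows "poly G z = 0 \<Longrightarrow> lead_coeff G * lead_coeff H > 0"
    and "poly H z = 0 \<Longrightarrow> lead_coeff G * lead_coeff H < 0"
proof -
  have tail: "poly P z * lead_coeff P > 0" if "P \<noteq> 0" "poly P z \<noteq> 0" "\<And>y. z < y \<Longrightarrow> poly P y \<noteq> 0" for P
    using poly_lead_coeff_pos_if_no_root_above[OF that(1)] that(2,3) by (metis order_le_less)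
  have root: "poly (pderiv P) z * lead_coeff P > 0"
    if "poly P z = 0" "poly (pderiv P) z \<noteq> 0" "\<And>y. z < y \<Longrightarrow> poly P y \<noteq> 0" for P
  proof -
    have "P \<noteq> 0" using that(3)[of "z + 1"] by auto
    then show ?thesis
      using pderiv_lead_coeff_nonneg_at_largest_root[of P z] that by (simp add: order_le_less)
  qed
  show "lead_coeff G * lead_coeff H > 0" if "poly G z = 0"
  proof -
    have "0 < (poly (pderiv G) z * lead_coeff G) * (poly H z * lead_coeff H)"
      using that root_simple no_common_root nonzero no_root by (intro mult_pos_pos root tail) auto
    also have "\<dots> = poly (wronskian G H) z * (lead_coeff G * lead_coeff H)"
      using that by (simp add: wronskian_def ac_simps)
    finally show ?thesis using wronskian_pos[of z] by (simp add: zero_less_mult_iff)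
  qed
  show "lead_coeff G * lead_coeff H < 0" if "poly H z = 0"
  proof -
    interpret HG: positive_wronskian H "- G" by (rule swap)
    have "0 < (poly (pderiv H) z * lead_coeff H) * (poly G z * lead_coeff G)"
      using that HG.root_simple no_common_root nonzero no_root by (intro mult_pos_pos root tail) auto
    also have "\<dots> = - poly (wronskian G H) z * (lead_coeff G * lead_coeff H)"
      using that by (simp add: wronskian_def ac_simps)
    finally show ?thesis using wronskian_pos[of z] by (simp add: mult_less_0_iff)
  qed
qed

end

lemma positive_wronskian_if_kernel:
  fixes G H :: "real poly"
  assumes "\<And>x y. poly G x * poly H y - poly G y * poly H x = c * ((x - y) * K x y)"
    and "c > 0" "\<And>x. K x x > 0" "\<And>x. isCont (K x) x"
  shows "positive_wronskian G H"
proof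
  fix x
  have "poly (wronskian G H) x = c * K x x"
    using assms(1,4) by (intro poly_wronskian_eq_kernel[where T = "\<lambda>y. c * K x y"]) (auto simp: ac_simps)
  then show "poly (wronskian G H) x > 0" using assms(2,3) by simp
qed

definition root_list :: "real poly \<Rightarrow> real list" where
  "root_list p = sorted_list_of_set {x. poly p x = 0}"

lemma root_list_uminus [simp]: "root_list (- p) = root_list p"
  by (simp add: root_list_def)

context positive_wronskian
begin

lemma roots_interlace_same_degree:
  assumes card: "card {x. poly G x = 0} = degree G" "card {x. poly H x = 0} = degree H"
    and deg: "degree G = degree H" and lc: "lead_coeff G * lead_coeff H > 0" and i: "i < degree G"
  shows "root_list H ! i < root_list G ! i"
    and "Suc i < degree G \<Longrightarrow> root_list G ! i < root_list H ! Suc i"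
proof -
  interpret HG: positive_wronskian H "- G" by (rule swap)
  define X where "X = {x. poly G x = 0}"
  define Y where "Y = {x. poly H x = 0}"
  have fin: "finite X" "finite Y"
    using poly_roots_finite nonzero by (simp_all add: X_def Y_def)
  have disj: "X \<inter> Y = {}" using no_common_root by (auto simp: X_def Y_def)
  have sep: "separates X Y"
    using HG.separates_roots by (simp add: X_def Y_def)
  have "card X \<noteq> 0" using i card by (simp add: X_def)
  then have "X \<noteq> {}" by auto
  define z where "z = Max (X \<union> Y)"
  have z: "z \<in> X \<union> Y" "\<And>y. y \<in> X \<union> Y \<Longrightarrow> y \<le> z"
    unfolding z_def using fin \<open>X \<noteq> {}\<close> Max_in[of "X \<union> Y"] by auto
  then have "z \<notin> Y"
    using largest_root_lead_coeff_sign(2)[of z] lc by (force simp: X_def Y_def)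
  then have top: "z \<in> X" "\<And>y. y \<in> Y \<Longrightarrow> y < z"
    using z by (auto simp: order_le_less)
  have "card X = card Y" using card deg by (simp add: X_def Y_def)
  note interlace = sorted_list_of_set_interlace_same_card[OF fin disj sep this top]
  show "root_list H ! i < root_list G ! i"
    using interlace(1) i card by (simp add: root_list_def X_def Y_def)
  show "root_list G ! i < root_list H ! Suc i" if "Suc i < degree G"
    using interlace(2) i card that by (simp add: root_list_def X_def Y_def)
qed

lemma roots_interlace_same_degree':
  assumes card: "card {x. poly G x = 0} = degree G" "card {x. poly H x = 0} = degree H"
    and deg: "degree G = degree H" and lc: "lead_coeff G * lead_coeff H < 0" and i: "i < degree G"
  shows "root_list G ! i < root_list H ! i"
    and "Suc i < degree G \<Longrightarrow> root_list H ! i < root_list G ! Suc i"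
proof -
  interpret HG: positive_wronskian H "- G" by (rule swap)
  have "card {x. poly (- G) x = 0} = degree (- G)" using card by simp
  note interlace = HG.roots_interlace_same_degree[OF card(2) this]
  show "root_list G ! i < root_list H ! i"
    using interlace(1) deg lc i by (simp add: lead_coeff_minus mult.commute)
  show "root_list H ! i < root_list G ! Suc i" if "Suc i < degree G"
    using interlace(2) deg lc i that by (simp add: lead_coeff_minus mult.commute)
qed

lemma roots_interlace_Suc_degree:
  assumes card: "card {x. poly G x = 0} = degree G" "card {x. poly H x = 0} = degree H"
    and deg: "degree G = degree H + 1" and i: "i < degree H"
  shows "root_list G ! i < root_list H ! i" and "root_list H ! i < root_list G ! Suc i"
proof -
  interpret HG: positive_wronskian H "- G" by (rule swap)
  have fin: "finite {x. poly G x = 0}" "finite {x. poly H x = 0}"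
    using nonzero by (simp_all add: poly_roots_finite)
  have disj: "{x. poly G x = 0} \<inter> {x. poly H x = 0} = {}" using no_common_root by auto
  note interlace = sorted_list_of_set_interlace_Suc_card[OF fin disj separates_roots]
  show "root_list G ! i < root_list H ! i" "root_list H ! i < root_list G ! Suc i"
    using interlace card deg i by (simp_all add: root_list_def)
qed

lemma roots_interlace_Suc_degree':
  assumes card: "card {x. poly G x = 0} = degree G" "card {x. poly H x = 0} = degree H"
    and deg: "degree H = degree G + 1" and i: "i < degree G"
  shows "root_list H ! i < root_list G ! i" and "root_list G ! i < root_list H ! Suc i"
proof -
  interpret HG: positive_wronskian H "- G" by (rule swap)
  have "card {x. poly (- G) x = 0} = degree (- G)" using card by simp
  then show "root_list H ! i < root_list G ! i" "root_list G ! i < root_list H ! Suc i"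
    using HG.roots_interlace_Suc_degree[OF card(2)] deg i by simp_all
qed

end

section \<open>Solutions of the recursion\<close>

lemma sin_cos_not_both_zero: "sin x = 0 \<Longrightarrow> cos x \<noteq> (0::real)"
  using sin_cos_squared_add[of x] by auto

locale sturm_liouville =
  fixes f q w :: "nat \<Rightarrow> real" and N :: nat
  assumes N2: "N \<ge> 2"
    and f_nz: "\<And>n. n \<le> N \<Longrightarrow> f n \<noteq> 0"
    and w_pos: "\<And>n. 1 \<le> n \<Longrightarrow> n \<le> N \<Longrightarrow> w n > 0"
begin

text \<open>\<open>ivp l a b n = (y\<^sub>n, f\<^sub>n \<Delta>y\<^sub>n)\<close> for the solution of the equation at \<open>\<lambda> = l\<close> with
  \<open>y\<^sub>0 = a\<close>, \<open>f\<^sub>0 \<Delta>y\<^sub>0 = b\<close>: the equation at \<open>n + 1\<close> is solved for \<open>f\<^sub>n\<^sub>+\<^sub>1 \<Delta>y\<^sub>n\<^sub>+\<^sub>1\<close>.\<close>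
fun ivp :: "'a::real_field \<Rightarrow> 'a \<Rightarrow> 'a \<Rightarrow> nat \<Rightarrow> 'a \<times> 'a" where
  "ivp l a b 0 = (a, b)"
| "ivp l a b (Suc n) =
    (let y = fst (ivp l a b n) + snd (ivp l a b n) / of_real (f n)
     in (y, snd (ivp l a b n) + (of_real (q (Suc n)) - l * of_real (w (Suc n))) * y))"

definition ivp_y :: "'a::real_field \<Rightarrow> 'a \<Rightarrow> 'a \<Rightarrow> nat \<Rightarrow> 'a" where
  "ivp_y l a b n = fst (ivp l a b n)"

definition ivp_qd :: "'a::real_field \<Rightarrow> 'a \<Rightarrow> 'a \<Rightarrow> nat \<Rightarrow> 'a" where
  "ivp_qd l a b n = snd (ivp l a b n)"

lemma ivp_y_0 [simp]: "ivp_y l a b 0 = a" and ivp_qd_0 [simp]: "ivp_qd l a b 0 = b"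
  by (simp_all add: ivp_y_def ivp_qd_def)

lemma ivp_y_Suc: "ivp_y l a b (Suc n) = ivp_y l a b n + ivp_qd l a b n / of_real (f n)"
  by (simp add: ivp_y_def ivp_qd_def Let_def)

lemma ivp_qd_Suc:
  "ivp_qd l a b (Suc n) = ivp_qd l a b n + (of_real (q (Suc n)) - l * of_real (w (Suc n))) * ivp_y l a b (Suc n)"
  by (simp add: ivp_y_def ivp_qd_def Let_def)

lemma lagrange_identity:
  "ivp_y l a1 b1 n * ivp_qd m a2 b2 n - ivp_y m a2 b2 n * ivp_qd l a1 b1 n
   = (a1 * b2 - a2 * b1) + (l - m) * (\<Sum>k\<in>{1..n}. of_real (w k) * ivp_y l a1 b1 k * ivp_y m a2 b2 k)"
proof (induction n)
  case 0
  then show ?case by simp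
next
  case (Suc n)
  have "ivp_y l a1 b1 (Suc n) * ivp_qd m a2 b2 n - ivp_y m a2 b2 (Suc n) * ivp_qd l a1 b1 n
      = ivp_y l a1 b1 n * ivp_qd m a2 b2 n - ivp_y m a2 b2 n * ivp_qd l a1 b1 n"
    by (simp add: ivp_y_Suc algebra_simps divide_inverse)
  then show ?case
    using Suc.IH by (simp only: ivp_qd_Suc sum.cl_ivl_Suc) (simp add: algebra_simps)
qed

lemma ivp_linear:
  "ivp_y l a b n = a * ivp_y l 1 0 n + b * ivp_y l 0 1 n \<and>
   ivp_qd l a b n = a * ivp_qd l 1 0 n + b * ivp_qd l 0 1 n"
proof (induction n)
  case 0
  then show ?case by simp
next
  case (Suc n)
  then have "ivp_y l a b (Suc n) = a * ivp_y l 1 0 (Suc n) + b * ivp_y l 0 1 (Suc n)"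
    by (simp add: ivp_y_Suc algebra_simps add_divide_distrib)
  with Suc show ?case by (simp add: ivp_qd_Suc algebra_simps)
qed

lemma ivp_zero [simp]: "ivp_y l 0 0 n = 0" "ivp_qd l 0 0 n = 0"
  using ivp_linear[of l 0 0 n] by simp_all

lemma ivp_scale: "ivp_y l (c * a) (c * b) n = c * ivp_y l a b n"
  using ivp_linear[of l "c * a" "c * b" n] ivp_linear[of l a b n] by (simp add: algebra_simps)

lemma ivp_initial_eq_0_if_vanishing:
  assumes "ivp_y l a b m = 0" "ivp_qd l a b m = 0"
  shows "a = 0 \<and> b = 0"
  using assms
proof (induction m)
  case 0
  then show ?case by simp
next
  case (Suc m)
  then have "ivp_qd l a b m = 0" by (simp add: ivp_qd_Suc)
  moreover from this have "ivp_y l a b m = 0" using Suc.prems by (simp add: ivp_y_Suc)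
  ultimately show ?case using Suc.IH by simp
qed

lemma ivp_initial_eq_0_if_consecutive_zeros:
  assumes "m < N" "ivp_y l a b m = 0" "ivp_y l a b (Suc m) = 0"
  shows "a = 0 \<and> b = 0"
proof -
  have "ivp_qd l a b m / of_real (f m) = 0" using assms by (simp add: ivp_y_Suc)
  then have "ivp_qd l a b m = 0" using f_nz[of m] assms(1) by simp
  then show ?thesis using ivp_initial_eq_0_if_vanishing assms(2) by blast
qed

lemma ivp_cnj:
  "ivp_y (cnj l) (cnj a) (cnj b) n = cnj (ivp_y l a b n) \<and> ivp_qd (cnj l) (cnj a) (cnj b) n = cnj (ivp_qd l a b n)"
  by (induction n) (simp_all add: ivp_y_Suc ivp_qd_Suc)

lemma weighted_sum_squares_pos:
  fixes g :: "nat \<Rightarrow> real"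
  assumes "k \<in> {1..N}" "g k \<noteq> 0"
  shows "(\<Sum>j\<in>{1..N}. w j * (g j)\<^sup>2) > 0"
proof (rule sum_pos2[OF _ assms(1)])
  show "0 < w k * (g k)\<^sup>2" using assms w_pos by simp
  show "0 \<le> w j * (g j)\<^sup>2" if "j \<in> {1..N}" for j using that w_pos[of j] by simp
qed simp

fun ivp_poly :: "real \<Rightarrow> real \<Rightarrow> nat \<Rightarrow> real poly \<times> real poly" where
  "ivp_poly a b 0 = ([:a:], [:b:])"
| "ivp_poly a b (Suc n) =
    (let y = fst (ivp_poly a b n) + smult (1 / f n) (snd (ivp_poly a b n))
     in (y, snd (ivp_poly a b n) + [:q (Suc n), - w (Suc n):] * y))"

definition ivp_poly_y :: "real \<Rightarrow> real \<Rightarrow> nat \<Rightarrow> real poly" where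
  "ivp_poly_y a b n = fst (ivp_poly a b n)"

definition ivp_poly_qd :: "real \<Rightarrow> real \<Rightarrow> nat \<Rightarrow> real poly" where
  "ivp_poly_qd a b n = snd (ivp_poly a b n)"

lemma ivp_poly_y_0 [simp]: "ivp_poly_y a b 0 = [:a:]" and ivp_poly_qd_0 [simp]: "ivp_poly_qd a b 0 = [:b:]"
  by (simp_all add: ivp_poly_y_def ivp_poly_qd_def)

lemma ivp_poly_y_Suc: "ivp_poly_y a b (Suc n) = ivp_poly_y a b n + smult (1 / f n) (ivp_poly_qd a b n)"
  by (simp add: ivp_poly_y_def ivp_poly_qd_def Let_def)

lemma ivp_poly_qd_Suc:
  "ivp_poly_qd a b (Suc n) = ivp_poly_qd a b n + [:q (Suc n), - w (Suc n):] * ivp_poly_y a b (Suc n)"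
  by (simp add: ivp_poly_y_def ivp_poly_qd_def Let_def)

lemma ivp_eq_poly:
  "ivp_y (l::'a::real_field) (of_real a) (of_real b) n = poly (map_of_real (ivp_poly_y a b n)) l \<and>
   ivp_qd l (of_real a) (of_real b) n = poly (map_of_real (ivp_poly_qd a b n)) l"
proof (induction n)
  case 0
  then show ?case by (simp add: map_of_real_pCons)
next
  case (Suc n)
  have y: "ivp_y l (of_real a) (of_real b) (Suc n) = poly (map_of_real (ivp_poly_y a b (Suc n))) l"
    using Suc by (simp add: ivp_y_Suc ivp_poly_y_Suc map_of_real_add map_of_real_smult divide_inverse
        of_real_inverse mult.commute)
  then have "ivp_qd l (of_real a) (of_real b) (Suc n) = poly (map_of_real (ivp_poly_qd a b (Suc n))) l"
    using Suc
    by (simp only: ivp_qd_Suc ivp_poly_qd_Suc map_of_real_add map_of_real_mult map_of_real_pCons map_poly_0)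
      (simp add: algebra_simps)
  with y show ?case by simp
qed

lemma ivp_y_real: "ivp_y (x::real) a b n = poly (ivp_poly_y a b n) x"
  and ivp_qd_real: "ivp_qd (x::real) a b n = poly (ivp_poly_qd a b n) x"
  using ivp_eq_poly[of x a b n] by simp_all

lemma ivp_poly_degree_step:
  assumes nz: "ivp_poly_qd a b m \<noteq> 0"
    and lower: "ivp_poly_y a b m = 0 \<or> degree (ivp_poly_y a b m) < degree (ivp_poly_qd a b m)"
  shows "m + k < N \<Longrightarrow>
    ivp_poly_y a b (Suc (m + k)) \<noteq> 0 \<and> degree (ivp_poly_y a b (Suc (m + k))) = degree (ivp_poly_qd a b m) + k
    \<and> ivp_poly_qd a b (Suc (m + k)) \<noteq> 0
    \<and> degree (ivp_poly_qd a b (Suc (m + k))) = degree (ivp_poly_y a b (Suc (m + k))) + 1"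
proof (induction k)
  case 0
  have y: "ivp_poly_y a b (Suc m) \<noteq> 0 \<and> degree (ivp_poly_y a b (Suc m)) = degree (ivp_poly_qd a b m)"
    unfolding ivp_poly_y_Suc using f_nz[of m] 0 by (intro degree_add_smult_dominant nz lower) auto
  have "ivp_poly_qd a b (Suc m) \<noteq> 0 \<and> degree (ivp_poly_qd a b (Suc m)) = degree (ivp_poly_y a b (Suc m)) + 1"
    unfolding ivp_poly_qd_Suc
    by (rule degree_add_linear_mult_dominant) (use y w_pos[of "Suc m"] 0 in auto)
  with y show ?case by simp
next
  case (Suc k)
  let ?n = "Suc (m + k)"
  have IH: "ivp_poly_qd a b ?n \<noteq> 0" "degree (ivp_poly_y a b ?n) < degree (ivp_poly_qd a b ?n)"
    "degree (ivp_poly_y a b ?n) = degree (ivp_poly_qd a b m) + k"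
    "degree (ivp_poly_qd a b ?n) = degree (ivp_poly_y a b ?n) + 1"
    using Suc by auto
  have y: "ivp_poly_y a b (Suc ?n) \<noteq> 0 \<and> degree (ivp_poly_y a b (Suc ?n)) = degree (ivp_poly_qd a b ?n)"
    using degree_add_smult_dominant[OF IH(1), of "ivp_poly_y a b ?n" "1 / f ?n"] ivp_poly_y_Suc[of a b ?n]
      f_nz[of ?n] Suc.prems IH(2) by auto
  have "ivp_poly_qd a b (Suc ?n) \<noteq> 0 \<and> degree (ivp_poly_qd a b (Suc ?n)) = degree (ivp_poly_y a b (Suc ?n)) + 1"
    unfolding ivp_poly_qd_Suc[of a b ?n]
    by (rule degree_add_linear_mult_dominant) (use y w_pos[of "Suc ?n"] Suc.prems in auto)
  with y IH show ?case by simp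
qed

lemma ivp_poly_degree_u:
  "ivp_poly_y 1 0 N \<noteq> 0 \<and> degree (ivp_poly_y 1 0 N) = N - 1 \<and>
   ivp_poly_qd 1 0 N \<noteq> 0 \<and> degree (ivp_poly_qd 1 0 N) = N"
proof -
  have "ivp_poly_y 1 0 1 = 1" "ivp_poly_qd 1 0 1 = [:q 1, - w 1:]"
    by (simp_all add: ivp_poly_y_Suc[of 1 0 0, simplified] ivp_poly_qd_Suc[of 1 0 0, simplified] one_pCons)
  moreover have "w 1 \<noteq> 0" using w_pos[of 1] N2 by simp
  moreover have "Suc (1 + (N - 2)) = N" "1 + (N - 2) = N - 1" using N2 by auto
  ultimately show ?thesis using ivp_poly_degree_step[of 1 0 1 "N - 2"] N2 by simp
qed

lemma ivp_poly_degree_v: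
  "ivp_poly_y (- 1 / f 0) 1 N \<noteq> 0 \<and> degree (ivp_poly_y (- 1 / f 0) 1 N) = N - 2 \<and>
   ivp_poly_qd (- 1 / f 0) 1 N \<noteq> 0 \<and> degree (ivp_poly_qd (- 1 / f 0) 1 N) = N - 1"
proof -
  have "ivp_poly_y (- 1 / f 0) 1 1 = 0" "ivp_poly_qd (- 1 / f 0) 1 1 = 1"
    using ivp_poly_y_Suc[of "- 1 / f 0" 1 0] ivp_poly_qd_Suc[of "- 1 / f 0" 1 0] f_nz[of 0]
    by (simp_all add: one_pCons)
  moreover have "Suc (1 + (N - 2)) = N" "N - 2 + 1 = N - 1" using N2 by auto
  ultimately show ?thesis using ivp_poly_degree_step[of "- 1 / f 0" 1 1 "N - 2"] N2 by simp
qed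

section \<open>The characteristic polynomial of the separated problem\<close>

definition char_fun :: "real \<Rightarrow> real \<Rightarrow> 'a::real_field \<Rightarrow> 'a" where
  "char_fun \<alpha> \<beta> z = of_real (cos \<beta>) * ivp_y z (of_real (sin \<alpha>)) (of_real (cos \<alpha>)) N
                    - of_real (sin \<beta>) * ivp_qd z (of_real (sin \<alpha>)) (of_real (cos \<alpha>)) N"

definition char_poly :: "real \<Rightarrow> real \<Rightarrow> real poly" where
  "char_poly \<alpha> \<beta> = smult (cos \<beta>) (ivp_poly_y (sin \<alpha>) (cos \<alpha>) N) - smult (sin \<beta>) (ivp_poly_qd (sin \<alpha>) (cos \<alpha>) N)"

lemma char_fun_eq_poly: "char_fun \<alpha> \<beta> z = poly (map_of_real (char_poly \<alpha> \<beta>)) z"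
  by (simp add: char_fun_def char_poly_def ivp_eq_poly map_of_real_diff map_of_real_smult)

lemma poly_char_poly: "poly (char_poly \<alpha> \<beta>) x = char_fun \<alpha> \<beta> x"
  by (simp add: char_fun_eq_poly)

lemma char_fun_real:
  "char_fun \<alpha> \<beta> (x::real) = cos \<beta> * ivp_y x (sin \<alpha>) (cos \<alpha>) N - sin \<beta> * ivp_qd x (sin \<alpha>) (cos \<alpha>) N"
  by (simp add: char_fun_def)

lemma isCont_ivp_y [continuous_intros]: "isCont (\<lambda>x::real. ivp_y x a b n) x"
  by (simp add: ivp_y_real)

lemma isCont_ivp_qd [continuous_intros]: "isCont (\<lambda>x::real. ivp_qd x a b n) x"
  by (simp add: ivp_qd_real)

definition eigenfunction :: "real \<Rightarrow> complex \<Rightarrow> nat \<Rightarrow> complex" where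
  "eigenfunction \<alpha> z n = (if n \<le> N + 1 then ivp_y z (of_real (sin \<alpha>)) (of_real (cos \<alpha>)) n else 0)"

lemma eigenfunction_nonzero: "eigenfunction \<alpha> z \<noteq> 0"
proof
  assume "eigenfunction \<alpha> z = 0"
  then have "eigenfunction \<alpha> z 0 = 0" "eigenfunction \<alpha> z 1 = 0" by simp_all
  then have "sin \<alpha> = 0" "sin \<alpha> + cos \<alpha> / f 0 = 0"
    by (auto simp: eigenfunction_def ivp_y_Suc[of _ _ _ 0, simplified])
  then show False using f_nz[of 0] sin_cos_not_both_zero[of \<alpha>] by simp
qed

lemma sl_bc_S_iff:
  "sl_bc f N (S_A \<alpha>) (S_B \<beta>) y \<longleftrightarrow>
     of_real (cos \<alpha>) * y 0 - of_real (sin \<alpha>) * (of_real (f 0) * fwd_diff y 0) = 0 \<and>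
     of_real (cos \<beta>) * y N - of_real (sin \<beta>) * (of_real (f N) * fwd_diff y N) = 0"
  by (simp add: sl_bc_def forall_2 S_A_def S_B_def)

lemma sl_eq_solution_eq_ivp:
  assumes eq: "sl_eq f q w N z y" and "n \<le> Suc N"
  shows "y n = ivp_y z (y 0) (of_real (f 0) * fwd_diff y 0) n"
proof -
  let ?Y = "ivp_y z (y 0) (of_real (f 0) * fwd_diff y 0)"
    and ?Q = "ivp_qd z (y 0) (of_real (f 0) * fwd_diff y 0)"
  have step: "y (Suc n) = ?Y (Suc n)" if "n \<le> N" "y n = ?Y n" "of_real (f n) * fwd_diff y n = ?Q n" for n
  proof -
    have "fwd_diff y n = ?Q n / of_real (f n)" using that f_nz[of n] by (simp add: field_simps)
    then show ?thesis using that by (simp add: fwd_diff_def ivp_y_Suc algebra_simps)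
  qed
  have upto_N: "y n = ?Y n \<and> of_real (f n) * fwd_diff y n = ?Q n" if "n \<le> N" for n
    using that
  proof (induction n)
    case 0
    then show ?case by simp
  next
    case (Suc n)
    then have IH: "y n = ?Y n" "of_real (f n) * fwd_diff y n = ?Q n" by auto
    have y: "y (Suc n) = ?Y (Suc n)" using step[OF _ IH] Suc.prems by simp
    have "- (of_real (f (Suc n)) * fwd_diff y (Suc n) - of_real (f n) * fwd_diff y n)
        + of_real (q (Suc n)) * y (Suc n) = z * of_real (w (Suc n)) * y (Suc n)"
      using bspec[OF eq[unfolded sl_eq_def], of "Suc n"] Suc.prems by simp
    then have "of_real (f (Suc n)) * fwd_diff y (Suc n) = ?Q (Suc n)"
      using IH(2) y by (simp add: ivp_qd_Suc algebra_simps)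
    with y show ?case by simp
  qed
  show ?thesis
  proof (cases "n = Suc N")
    case True
    then show ?thesis using step[of N] upto_N[of N] by simp
  next
    case False
    then show ?thesis using upto_N[of n] \<open>n \<le> Suc N\<close> by simp
  qed
qed

lemma ivp_solves_sl_eq:
  shows "sl_eq f q w N z (\<lambda>n. c * ivp_y z a b n)"
    and "n \<le> N \<Longrightarrow> of_real (f n) * fwd_diff (\<lambda>n. c * ivp_y z a b n) n = c * ivp_qd z a b n"
proof -
  show qd: "of_real (f n) * fwd_diff (\<lambda>n. c * ivp_y z a b n) n = c * ivp_qd z a b n" if "n \<le> N" for n
    using that f_nz[of n] by (simp add: fwd_diff_def ivp_y_Suc algebra_simps)
  show "sl_eq f q w N z (\<lambda>n. c * ivp_y z a b n)"
    unfolding sl_eq_def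
  proof
    fix n assume n: "n \<in> {1..N}"
    then obtain m where "n = Suc m" by (cases n) auto
    then show "- (of_real (f n) * fwd_diff (\<lambda>n. c * ivp_y z a b n) n
        - of_real (f (n - 1)) * fwd_diff (\<lambda>n. c * ivp_y z a b n) (n - 1))
        + of_real (q n) * (c * ivp_y z a b n) = z * of_real (w n) * (c * ivp_y z a b n)"
      using qd[of n] qd[of m] n by (simp add: ivp_qd_Suc algebra_simps)
  qed
qed

lemma sl_eq_cong:
  assumes "\<And>n. n \<le> Suc N \<Longrightarrow> y n = y' n"
  shows "sl_eq f q w N z y \<longleftrightarrow> sl_eq f q w N z y'"
  unfolding sl_eq_def fwd_diff_def using assms by (intro ball_cong) auto

lemma sl_solution_S_eq_multiple:
  assumes sol: "y \<in> sl_solutions f q w N (S_A \<alpha>) (S_B \<beta>) z"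
  shows "\<exists>c. y = (\<lambda>n. c * eigenfunction \<alpha> z n)"
proof -
  let ?a = "of_real (sin \<alpha>) :: complex" and ?b = "of_real (cos \<alpha>) :: complex"
  define F0 where "F0 = of_real (f 0) * fwd_diff y 0"
  define c where "c = ?a * y 0 + ?b * F0"
  have left_bc: "?b * y 0 = ?a * F0" using sol by (simp add: sl_solutions_def sl_bc_S_iff F0_def)
  have norm: "?a * ?a + ?b * ?b = 1"
    by (metis of_real_add of_real_mult of_real_1 sin_cos_squared_add power2_eq_square)
  have "c * ?a = (?a * ?a + ?b * ?b) * y 0" "c * ?b = (?a * ?a + ?b * ?b) * F0"
    using left_bc by (simp_all add: c_def algebra_simps)
  then have "y 0 = c * ?a" "F0 = c * ?b" using norm by simp_all
  then have "y n = c * eigenfunction \<alpha> z n" for n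
    using sol sl_eq_solution_eq_ivp[of z y n] ivp_scale[of z c ?a ?b n]
    by (cases "n \<le> Suc N") (auto simp: sl_solutions_def F0_def mult.commute eigenfunction_def)
  then show ?thesis by blast
qed

lemma sl_solutions_S_iff:
  "y \<in> sl_solutions f q w N (S_A \<alpha>) (S_B \<beta>) z \<longleftrightarrow>
     (\<exists>c. y = (\<lambda>n. c * eigenfunction \<alpha> z n) \<and> (c = 0 \<or> char_fun \<alpha> \<beta> z = 0))"
proof -
  let ?a = "of_real (sin \<alpha>) :: complex" and ?b = "of_real (cos \<alpha>) :: complex"
  have eigen_ivp: "eigenfunction \<alpha> z n = ivp_y z ?a ?b n" if "n \<le> Suc N" for n
    using that by (simp add: eigenfunction_def)
  have solves: "y \<in> sl_solutions f q w N (S_A \<alpha>) (S_B \<beta>) z \<longleftrightarrow> c * char_fun \<alpha> \<beta> z = 0"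
    if y: "y = (\<lambda>n. c * eigenfunction \<alpha> z n)" for c
  proof -
    have "sl_eq f q w N z y"
      using ivp_solves_sl_eq(1)[of z c ?a ?b] by (subst sl_eq_cong) (auto simp: y eigen_ivp)
    moreover have "of_real (f n) * fwd_diff y n = c * ivp_qd z ?a ?b n" if "n \<le> N" for n
      using ivp_solves_sl_eq(2)[OF that, where z = z and c = c and a = ?a and b = ?b] that
      by (simp add: y eigen_ivp fwd_diff_def)
    moreover have "\<forall>n>N + 1. y n = 0" by (simp add: y eigenfunction_def)
    ultimately show ?thesis
      by (simp add: sl_solutions_def sl_bc_S_iff y eigen_ivp char_fun_def algebra_simps)
  qed
  show ?thesis
  proof
    assume sol: "y \<in> sl_solutions f q w N (S_A \<alpha>) (S_B \<beta>) z"
    then obtain c where "y = (\<lambda>n. c * eigenfunction \<alpha> z n)" using sl_solution_S_eq_multiple by blast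
    with sol solves show "\<exists>c. y = (\<lambda>n. c * eigenfunction \<alpha> z n) \<and> (c = 0 \<or> char_fun \<alpha> \<beta> z = 0)"
      by auto
  qed (use solves in auto)
qed

lemma sl_is_eigenvalue_S_iff: "sl_is_eigenvalue f q w N (S_A \<alpha>) (S_B \<beta>) z \<longleftrightarrow> char_fun \<alpha> \<beta> z = 0"
  using eigenfunction_nonzero[of \<alpha> z]
  by (auto simp: sl_is_eigenvalue_def sl_solutions_S_iff fun_eq_iff)

lemma sl_mult_S:
  assumes "char_fun \<alpha> \<beta> z = 0"
  shows "sl_mult f q w N (S_A \<alpha>) (S_B \<beta>) z = 1"
proof -
  interpret V: vector_space "\<lambda>(c::complex) (y::nat \<Rightarrow> complex). (\<lambda>n. c * y n)"
    by unfold_locales (auto simp: fun_eq_iff algebra_simps)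
  have "sl_solutions f q w N (S_A \<alpha>) (S_B \<beta>) z = V.span {eigenfunction \<alpha> z}"
    using assms by (auto simp: V.span_singleton sl_solutions_S_iff image_iff)
  moreover have "V.independent {eigenfunction \<alpha> z}" using eigenfunction_nonzero[of \<alpha> z] by simp
  ultimately show ?thesis
    unfolding sl_mult_def using V.dim_span_eq_card_independent by simp
qed

text \<open>Lagrange's identity for \<open>\<lambda>\<close> and \<open>cnj \<lambda>\<close>: the boundary terms cancel, so
  \<open>(\<lambda> - cnj \<lambda>) \<Sum> w\<^sub>k |y\<^sub>k|\<^sup>2 = 0\<close>.\<close>
lemma eigenvalue_real:
  assumes "char_fun \<alpha> \<beta> z = 0"
  shows "Im z = 0"
proof (rule ccontr)
  assume "Im z \<noteq> 0"
  let ?a = "of_real (sin \<alpha>) :: complex" and ?b = "of_real (cos \<alpha>) :: complex"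
  let ?y = "ivp_y z ?a ?b" and ?Q = "ivp_qd z ?a ?b"
  have cnj: "ivp_y (cnj z) ?a ?b n = cnj (?y n)" "ivp_qd (cnj z) ?a ?b n = cnj (?Q n)" for n
    using ivp_cnj[of z ?a ?b n] by simp_all
  have right_bc: "of_real (cos \<beta>) * ?y N = of_real (sin \<beta>) * ?Q N"
    using assms by (simp add: char_fun_def)
  have "?y N * cnj (?Q N) - cnj (?y N) * ?Q N = 0"
  proof (cases "sin \<beta> = 0")
    case True
    then show ?thesis using right_bc sin_cos_not_both_zero[of \<beta>] by simp
  next
    case False
    then have "?Q N = of_real (cos \<beta> / sin \<beta>) * ?y N" using right_bc by (simp add: field_simps)
    then show ?thesis by simp
  qed
  then have "(z - cnj z) * (\<Sum>k\<in>{1..N}. of_real (w k) * ?y k * cnj (?y k)) = 0"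
    using lagrange_identity[of z ?a ?b N "cnj z" ?a ?b] by (simp add: cnj)
  moreover have "z - cnj z \<noteq> 0" using \<open>Im z \<noteq> 0\<close> by (simp add: complex_eq_iff)
  moreover have "(\<Sum>k\<in>{1..N}. of_real (w k) * ?y k * cnj (?y k)) = of_real (\<Sum>k\<in>{1..N}. w k * (cmod (?y k))\<^sup>2)"
    using complex_norm_square by (simp add: of_real_sum mult.assoc)
  ultimately have "complex_of_real (\<Sum>k\<in>{1..N}. w k * (cmod (?y k))\<^sup>2) = 0"
    by (metis mult_eq_0_iff)
  then have "(\<Sum>k\<in>{1..N}. w k * (cmod (?y k))\<^sup>2) = 0" by (simp only: of_real_eq_0_iff)
  then have "?y 1 = 0" "?y 2 = 0"
    using weighted_sum_squares_pos[of 1 "\<lambda>k. cmod (?y k)"] weighted_sum_squares_pos[of 2 "\<lambda>k. cmod (?y k)"] N2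
    by force+
  then show False
    using ivp_initial_eq_0_if_consecutive_zeros[of 1 z ?a ?b] N2 sin_cos_not_both_zero[of \<alpha>]
    by (simp add: numeral_2_eq_2)
qed

text \<open>\<open>y1 \<alpha>\<close> is \<open>y\<^sub>1\<close> for the solution with \<open>(y\<^sub>0, f\<^sub>0 \<Delta>y\<^sub>0) = (sin \<alpha>, cos \<alpha>)\<close>; that solution is
  \<open>y1 \<alpha>\<close> times the one starting with \<open>(1, 0)\<close> plus \<open>cos \<alpha>\<close> times the one starting with \<open>(-1/f\<^sub>0, 1)\<close>,
  whose \<open>y\<^sub>1\<close> vanishes and which therefore has lower degree in \<open>\<lambda>\<close>.\<close>
definition y1 :: "real \<Rightarrow> real" where
  "y1 \<alpha> = sin \<alpha> + cos \<alpha> / f 0"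

definition char_poly_u :: "real \<Rightarrow> real poly" where
  "char_poly_u \<beta> = smult (cos \<beta>) (ivp_poly_y 1 0 N) - smult (sin \<beta>) (ivp_poly_qd 1 0 N)"

definition char_poly_v :: "real \<Rightarrow> real poly" where
  "char_poly_v \<beta> = smult (cos \<beta>) (ivp_poly_y (- 1 / f 0) 1 N) - smult (sin \<beta>) (ivp_poly_qd (- 1 / f 0) 1 N)"

lemma char_poly_decompose: "char_poly \<alpha> \<beta> = smult (y1 \<alpha>) (char_poly_u \<beta>) + smult (cos \<alpha>) (char_poly_v \<beta>)"
proof -
  have "poly (char_poly \<alpha> \<beta>) x = poly (smult (y1 \<alpha>) (char_poly_u \<beta>) + smult (cos \<alpha>) (char_poly_v \<beta>)) x" for x
    using ivp_linear[of x "sin \<alpha>" "cos \<alpha>" N] ivp_linear[of x "- 1 / f 0" 1 N] f_nz[of 0]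
    by (simp add: poly_char_poly char_fun_real char_poly_u_def char_poly_v_def y1_def
        flip: ivp_y_real ivp_qd_real) (simp add: field_simps)
  then show ?thesis by (simp add: poly_eq_poly_eq_iff[symmetric] fun_eq_iff)
qed

lemma char_poly_u:
  "char_poly_u \<beta> \<noteq> 0" "degree (char_poly_u \<beta>) = (if sin \<beta> = 0 then N - 1 else N)"
  "sin \<beta> \<noteq> 0 \<Longrightarrow> lead_coeff (char_poly_u \<beta>) = - sin \<beta> * lead_coeff (ivp_poly_qd 1 0 N)"
proof -
  have deg: "degree (ivp_poly_y 1 0 N) = N - 1" "degree (ivp_poly_qd 1 0 N) = N"
    using ivp_poly_degree_u by simp_all
  then have "degree (ivp_poly_qd 1 0 N) = degree (ivp_poly_y 1 0 N) + 1" using N2 by simp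
  note char = degree_smult_diff_smult[OF _ this, of "cos \<beta>" "sin \<beta>", folded char_poly_u_def]
  show "char_poly_u \<beta> \<noteq> 0" "degree (char_poly_u \<beta>) = (if sin \<beta> = 0 then N - 1 else N)"
    "sin \<beta> \<noteq> 0 \<Longrightarrow> lead_coeff (char_poly_u \<beta>) = - sin \<beta> * lead_coeff (ivp_poly_qd 1 0 N)"
    using char ivp_poly_degree_u sin_cos_not_both_zero[of \<beta>] by (auto simp: deg)
qed

lemma char_poly_v:
  "char_poly_v \<beta> \<noteq> 0" "degree (char_poly_v \<beta>) = (if sin \<beta> = 0 then N - 2 else N - 1)"
  "sin \<beta> \<noteq> 0 \<Longrightarrow> lead_coeff (char_poly_v \<beta>) = - sin \<beta> * lead_coeff (ivp_poly_qd (- 1 / f 0) 1 N)"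
proof -
  have deg: "degree (ivp_poly_y (- 1 / f 0) 1 N) = N - 2" "degree (ivp_poly_qd (- 1 / f 0) 1 N) = N - 1"
    using ivp_poly_degree_v by simp_all
  then have "degree (ivp_poly_qd (- 1 / f 0) 1 N) = degree (ivp_poly_y (- 1 / f 0) 1 N) + 1" using N2 by simp
  note char = degree_smult_diff_smult[OF _ this, of "cos \<beta>" "sin \<beta>", folded char_poly_v_def]
  show "char_poly_v \<beta> \<noteq> 0" "degree (char_poly_v \<beta>) = (if sin \<beta> = 0 then N - 2 else N - 1)"
    "sin \<beta> \<noteq> 0 \<Longrightarrow> lead_coeff (char_poly_v \<beta>) = - sin \<beta> * lead_coeff (ivp_poly_qd (- 1 / f 0) 1 N)"
    using char ivp_poly_degree_v sin_cos_not_both_zero[of \<beta>] by (auto simp: deg)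
qed

lemma char_poly_y1_eq_0:
  assumes "y1 \<alpha> = 0"
  shows "char_poly \<alpha> \<beta> = smult (cos \<alpha>) (char_poly_v \<beta>)" and "cos \<alpha> \<noteq> 0"
  using assms sin_cos_not_both_zero[of \<alpha>] by (auto simp: char_poly_decompose y1_def)

lemma char_poly_y1_ne_0:
  assumes "y1 \<alpha> \<noteq> 0"
  shows "degree (char_poly \<alpha> \<beta>) = degree (char_poly_u \<beta>)"
    and "lead_coeff (char_poly \<alpha> \<beta>) = y1 \<alpha> * lead_coeff (char_poly_u \<beta>)"
proof -
  have d: "degree (smult (cos \<alpha>) (char_poly_v \<beta>)) < degree (smult (y1 \<alpha>) (char_poly_u \<beta>))"
    using char_poly_u[of \<beta>] char_poly_v[of \<beta>] assms N2 by auto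
  show "degree (char_poly \<alpha> \<beta>) = degree (char_poly_u \<beta>)"
    "lead_coeff (char_poly \<alpha> \<beta>) = y1 \<alpha> * lead_coeff (char_poly_u \<beta>)"
    unfolding char_poly_decompose using degree_add_eq_left[OF d] lead_coeff_add_le[OF d] assms
    by (simp_all add: add.commute lead_coeff_smult)
qed

lemma char_poly_nonzero: "char_poly \<alpha> \<beta> \<noteq> 0"
proof (cases "y1 \<alpha> = 0")
  case False
  then have "lead_coeff (char_poly \<alpha> \<beta>) \<noteq> 0"
    using char_poly_y1_ne_0(2) char_poly_u(1)[of \<beta>] by simp
  then show ?thesis by auto
qed (use char_poly_y1_eq_0 char_poly_v(1) in simp)

lemma degree_char_poly: "degree (char_poly \<alpha> \<beta>) =
    (if y1 \<alpha> \<noteq> 0 then (if sin \<beta> = 0 then N - 1 else N) else (if sin \<beta> = 0 then N - 2 else N - 1))"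
  using char_poly_y1_eq_0 char_poly_y1_ne_0(1) char_poly_u(2) char_poly_v(2) by auto

lemma lead_coeff_char_poly: "lead_coeff (char_poly \<alpha> \<beta>) =
    (if y1 \<alpha> \<noteq> 0 then y1 \<alpha> * lead_coeff (char_poly_u \<beta>) else cos \<alpha> * lead_coeff (char_poly_v \<beta>))"
  using char_poly_y1_eq_0(1) char_poly_y1_ne_0(2) by (auto simp: lead_coeff_smult)

definition beta_kernel :: "real \<Rightarrow> real \<Rightarrow> real \<Rightarrow> real" where
  "beta_kernel \<alpha> x y = (\<Sum>k\<in>{1..N}. w k * ivp_y x (sin \<alpha>) (cos \<alpha>) k * ivp_y y (sin \<alpha>) (cos \<alpha>) k)"

lemma char_fun_beta_identity:
  "char_fun \<alpha> \<beta> x * char_fun \<alpha> \<beta>' y - char_fun \<alpha> \<beta> y * char_fun \<alpha> \<beta>' x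
   = sin (\<beta> - \<beta>') * ((x - y) * beta_kernel \<alpha> x (y::real))"
proof -
  have lagrange: "ivp_y x (sin \<alpha>) (cos \<alpha>) N * ivp_qd y (sin \<alpha>) (cos \<alpha>) N - ivp_y y (sin \<alpha>) (cos \<alpha>) N * ivp_qd x (sin \<alpha>) (cos \<alpha>) N
      = (x - y) * beta_kernel \<alpha> x y"
    using lagrange_identity[of x "sin \<alpha>" "cos \<alpha>" N y] by (simp add: beta_kernel_def)
  show ?thesis unfolding char_fun_real sin_diff lagrange[symmetric] by (simp add: algebra_simps)
qed

lemma isCont_beta_kernel: "isCont (beta_kernel \<alpha> x) y"
  unfolding beta_kernel_def[abs_def] by (intro continuous_intros)

lemma beta_kernel_diag_pos: "beta_kernel \<alpha> x x > 0"
proof -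
  have "ivp_y x (sin \<alpha>) (cos \<alpha>) 1 \<noteq> 0 \<or> ivp_y x (sin \<alpha>) (cos \<alpha>) 2 \<noteq> 0"
    using ivp_initial_eq_0_if_consecutive_zeros[of 1 x "sin \<alpha>" "cos \<alpha>"] N2 sin_cos_not_both_zero[of \<alpha>]
    by (auto simp: numeral_2_eq_2)
  then show ?thesis
    using weighted_sum_squares_pos[of 1] weighted_sum_squares_pos[of 2] N2
    by (auto simp: beta_kernel_def power2_eq_square mult.assoc)
qed

lemma positive_wronskian_beta:
  assumes "sin (\<beta> - \<beta>') > 0"
  shows "positive_wronskian (char_poly \<alpha> \<beta>) (char_poly \<alpha> \<beta>')"
  by (rule positive_wronskian_if_kernel[where K = "beta_kernel \<alpha>"])
    (use assms beta_kernel_diag_pos isCont_beta_kernel in \<open>auto simp: poly_char_poly char_fun_beta_identity\<close>)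

definition char_10 :: "real \<Rightarrow> real \<Rightarrow> real" where
  "char_10 \<beta> x = cos \<beta> * ivp_y x 1 0 N - sin \<beta> * ivp_qd x 1 0 N"

definition char_01 :: "real \<Rightarrow> real \<Rightarrow> real" where
  "char_01 \<beta> x = cos \<beta> * ivp_y x 0 1 N - sin \<beta> * ivp_qd x 0 1 N"

lemma char_fun_eq_char_10_01: "char_fun \<alpha> \<beta> (x::real) = sin \<alpha> * char_10 \<beta> x + cos \<alpha> * char_01 \<beta> x"
  using ivp_linear[of x "sin \<alpha>" "cos \<alpha>" N] by (simp add: char_fun_real char_10_def char_01_def algebra_simps)

text \<open>The solution satisfying the right boundary condition \<open>S\<^sub>\<beta>\<close>, normalised by
  \<open>(y\<^sub>N, f\<^sub>N \<Delta>y\<^sub>N) = (sin \<beta>, cos \<beta>)\<close> (as the Wronskian of \<open>(1, 0)\<close> and \<open>(0, 1)\<close> is \<open>1\<close>).\<close>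
definition right_sol :: "real \<Rightarrow> real \<Rightarrow> nat \<Rightarrow> real" where
  "right_sol \<beta> x k = ivp_y x (- char_01 \<beta> x) (char_10 \<beta> x) k"

lemma right_sol_N: "right_sol \<beta> x N = sin \<beta> \<and> ivp_qd x (- char_01 \<beta> x) (char_10 \<beta> x) N = cos \<beta>"
proof -
  have det: "ivp_y x 1 0 N * ivp_qd x 0 1 N - ivp_y x 0 1 N * ivp_qd (x::real) 1 0 N = 1"
    using lagrange_identity[of x 1 0 N x 0 1] by simp
  show ?thesis
    using ivp_linear[of x "- char_01 \<beta> x" "char_10 \<beta> x" N] det
    by (simp add: right_sol_def char_10_def char_01_def algebra_simps)
qed

definition alpha_kernel :: "real \<Rightarrow> real \<Rightarrow> real \<Rightarrow> real" where
  "alpha_kernel \<beta> x y = (\<Sum>k\<in>{1..N}. w k * right_sol \<beta> x k * right_sol \<beta> y k)"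

lemma char_fun_alpha_identity:
  "char_fun \<alpha> \<beta> x * char_fun \<alpha>' \<beta> y - char_fun \<alpha> \<beta> y * char_fun \<alpha>' \<beta> x
   = sin (\<alpha>' - \<alpha>) * ((x - y) * alpha_kernel \<beta> x (y::real))"
proof -
  have "right_sol \<beta> x N * ivp_qd y (- char_01 \<beta> y) (char_10 \<beta> y) N
      - right_sol \<beta> y N * ivp_qd x (- char_01 \<beta> x) (char_10 \<beta> x) N
      = (- char_01 \<beta> x * char_10 \<beta> y + char_01 \<beta> y * char_10 \<beta> x) + (x - y) * alpha_kernel \<beta> x y"
    using lagrange_identity[of x "- char_01 \<beta> x" "char_10 \<beta> x" N y "- char_01 \<beta> y" "char_10 \<beta> y"]
    by (simp add: right_sol_def alpha_kernel_def)
  then have uv: "char_10 \<beta> x * char_01 \<beta> y - char_10 \<beta> y * char_01 \<beta> x = - ((x - y) * alpha_kernel \<beta> x y)"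
    using right_sol_N[of \<beta> x] right_sol_N[of \<beta> y] by (simp add: algebra_simps)
  have "char_fun \<alpha> \<beta> x * char_fun \<alpha>' \<beta> y - char_fun \<alpha> \<beta> y * char_fun \<alpha>' \<beta> x
      = (sin \<alpha> * cos \<alpha>' - cos \<alpha> * sin \<alpha>') * (char_10 \<beta> x * char_01 \<beta> y - char_10 \<beta> y * char_01 \<beta> x)"
    unfolding char_fun_eq_char_10_01 by (simp add: algebra_simps)
  also have "\<dots> = sin (\<alpha>' - \<alpha>) * ((x - y) * alpha_kernel \<beta> x y)"
    unfolding uv sin_diff by (simp add: algebra_simps)
  finally show ?thesis .
qed

lemma isCont_alpha_kernel: "isCont (alpha_kernel \<beta> x) y"
proof -
  have "right_sol \<beta> y k = - char_01 \<beta> y * ivp_y y 1 0 k + char_10 \<beta> y * ivp_y y 0 1 k" for y k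
    using ivp_linear[of y "- char_01 \<beta> y" "char_10 \<beta> y" k] by (simp add: right_sol_def)
  then show ?thesis
    unfolding alpha_kernel_def[abs_def] char_10_def char_01_def by (simp only:) (intro continuous_intros)
qed

lemma alpha_kernel_diag_pos: "alpha_kernel \<beta> x x > 0"
proof -
  have "right_sol \<beta> x (N - 1) \<noteq> 0 \<or> right_sol \<beta> x N \<noteq> 0"
  proof (rule ccontr)
    assume "\<not> ?thesis"
    moreover have "N - 1 < N" "Suc (N - 1) = N" using N2 by auto
    ultimately have "- char_01 \<beta> x = 0 \<and> char_10 \<beta> x = 0"
      using ivp_initial_eq_0_if_consecutive_zeros[of "N - 1" x "- char_01 \<beta> x" "char_10 \<beta> x"]
      unfolding right_sol_def by metis
    then show False using right_sol_N[of \<beta> x] sin_cos_not_both_zero[of \<beta>] by (simp add: right_sol_def)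
  qed
  then show ?thesis
    using weighted_sum_squares_pos[of "N - 1"] weighted_sum_squares_pos[of N] N2
    by (auto simp: alpha_kernel_def power2_eq_square mult.assoc)
qed

lemma positive_wronskian_alpha:
  assumes "sin (\<alpha>' - \<alpha>) > 0"
  shows "positive_wronskian (char_poly \<alpha> \<beta>) (char_poly \<alpha>' \<beta>)"
  by (rule positive_wronskian_if_kernel[where K = "alpha_kernel \<beta>"])
    (use assms alpha_kernel_diag_pos isCont_alpha_kernel in \<open>auto simp: poly_char_poly char_fun_alpha_identity\<close>)

lemma card_roots_char_poly: "card {x. poly (char_poly \<alpha> \<beta>) x = 0} = degree (char_poly \<alpha> \<beta>)"
proof (rule card_roots_eq_degree_if_real_simple[OF char_poly_nonzero])
  show "Im z = 0" if "poly (map_of_real (char_poly \<alpha> \<beta>)) z = 0" for z :: complex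
    using that eigenvalue_real by (simp add: char_fun_eq_poly)
  interpret positive_wronskian "char_poly \<alpha> \<beta>" "char_poly \<alpha> (\<beta> - pi / 2)"
    by (rule positive_wronskian_beta) simp
  show "poly (pderiv (char_poly \<alpha> \<beta>)) x \<noteq> 0" if "poly (char_poly \<alpha> \<beta>) x = 0" for x
    using that by (rule root_simple)
qed

lemma sl_eigenvalues_S: "{z. sl_is_eigenvalue f q w N (S_A \<alpha>) (S_B \<beta>) z} = of_real ` {x. poly (char_poly \<alpha> \<beta>) x = 0}"
proof (intro equalityI subsetI)
  fix z assume "z \<in> {z. sl_is_eigenvalue f q w N (S_A \<alpha>) (S_B \<beta>) z}"
  then have z: "char_fun \<alpha> \<beta> z = 0" by (simp add: sl_is_eigenvalue_S_iff)
  then have real: "z = of_real (Re z)" using eigenvalue_real by (simp add: complex_eq_iff)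
  then have "of_real (poly (char_poly \<alpha> \<beta>) (Re z)) = (0::complex)"
    using z by (metis char_fun_eq_poly poly_map_of_real)
  with real show "z \<in> of_real ` {x. poly (char_poly \<alpha> \<beta>) x = 0}" by auto
qed (auto simp: sl_is_eigenvalue_S_iff char_fun_eq_poly poly_map_of_real)

lemma sl_num_eigenvalues_S: "sl_num_eigenvalues_is f q w N (S_A \<alpha>) (S_B \<beta>) (degree (char_poly \<alpha> \<beta>))"
proof -
  have "sl_mult f q w N (S_A \<alpha>) (S_B \<beta>) z = 1" if "z \<in> of_real ` {x. poly (char_poly \<alpha> \<beta>) x = 0}" for z
    using that by (intro sl_mult_S) (auto simp: char_fun_eq_poly poly_map_of_real)
  then have "(\<Sum>z\<in>of_real ` {x. poly (char_poly \<alpha> \<beta>) x = 0}. sl_mult f q w N (S_A \<alpha>) (S_B \<beta>) z)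
      = card (of_real ` {x. poly (char_poly \<alpha> \<beta>) x = 0} :: complex set)"
    by simp
  also have "\<dots> = degree (char_poly \<alpha> \<beta>)"
    using card_roots_char_poly by (subst card_image) (simp_all add: inj_on_def)
  finally show ?thesis
    using poly_roots_finite[OF char_poly_nonzero]
    unfolding sl_num_eigenvalues_is_def sl_eigenvalues_S by simp
qed

lemma sl_eig_S: "sl_eig f q w N (S_A \<alpha>) (S_B \<beta>) n = root_list (char_poly \<alpha> \<beta>) ! n"
proof -
  have roots: "{x. sl_is_eigenvalue f q w N (S_A \<alpha>) (S_B \<beta>) (of_real x)} = {x. poly (char_poly \<alpha> \<beta>) x = 0}"
    by (auto simp: sl_is_eigenvalue_S_iff char_fun_eq_poly poly_map_of_real)
  have mult_1: "map (\<lambda>x. replicate (sl_mult f q w N (S_A \<alpha>) (S_B \<beta>) (of_real x)) x) (root_list (char_poly \<alpha> \<beta>))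
      = map (\<lambda>x. [x]) (root_list (char_poly \<alpha> \<beta>))"
    using poly_roots_finite[OF char_poly_nonzero]
    by (intro map_cong) (auto simp: root_list_def sl_mult_S char_fun_eq_poly poly_map_of_real)
  have "concat (map (\<lambda>x. [x]) xs) = xs" for xs :: "real list" by (induction xs) auto
  then show ?thesis unfolding sl_eig_def roots root_list_def[symmetric] mult_1 by simp
qed

end

section \<open>Dependence on the boundary angles\<close>

lemma xi_of_bounds_cos:
  fixes f0 :: real
  assumes "f0 \<noteq> 0"
  shows "0 < xi_of f0" "xi_of f0 < pi" "cos (xi_of f0) = - f0 * sin (xi_of f0)"
proof -
  define t where "t = arctan (- 1 / f0)"
  define s where "s = sqrt (1 + (- 1 / f0)\<^sup>2)"
  have s: "s > 0" by (simp add: s_def add_pos_nonneg)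
  have sin_cos: "sin t = (- 1 / f0) / s" "cos t = 1 / s"
    by (simp_all add: t_def s_def sin_arctan cos_arctan)
  have "- (pi / 2) < t" "t < pi / 2" using arctan_bounded unfolding t_def by blast+
  moreover have "t < 0 \<longleftrightarrow> f0 > 0" "t > 0 \<longleftrightarrow> f0 < 0"
    using assms by (auto simp: t_def divide_less_0_iff)
  moreover have "xi_of f0 = (if f0 > 0 then t + pi else t)" by (simp add: xi_of_def t_def)
  ultimately show "0 < xi_of f0" "xi_of f0 < pi"
    using assms by (auto simp: linorder_neq_iff)
  have "cos t = - f0 * sin t" using assms s by (simp add: sin_cos field_simps)
  then show "cos (xi_of f0) = - f0 * sin (xi_of f0)" by (simp add: xi_of_def t_def)
qed

context sturm_liouville
begin

abbreviation \<xi> :: real where "\<xi> \<equiv> xi_of (f 0)"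

lemma xi_bounds: "0 < \<xi>" "\<xi> < pi"
  using xi_of_bounds_cos f_nz[of 0] by auto

text \<open>Since \<open>cot \<xi> = - f\<^sub>0\<close>, \<open>\<xi>\<close> is the angle at which \<open>y\<^sub>1\<close> vanishes.\<close>
lemma y1_eq_sin_xi_diff: "y1 \<alpha> = sin (\<xi> - \<alpha>) / (f 0 * sin \<xi>)"
proof -
  have "sin \<xi> > 0" using xi_bounds by (simp add: sin_gt_zero)
  then show ?thesis
    using xi_of_bounds_cos(3)[of "f 0"] f_nz[of 0] by (simp add: y1_def sin_diff field_simps)
qed

lemma sin_xi_diff_pos: "0 \<le> \<alpha> \<Longrightarrow> \<alpha> < \<xi> \<Longrightarrow> sin (\<xi> - \<alpha>) > 0"
  using xi_bounds by (intro sin_gt_zero) auto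

lemma sin_xi_diff_neg: "\<xi> < \<alpha> \<Longrightarrow> \<alpha> < pi \<Longrightarrow> sin (\<xi> - \<alpha>) < 0"
  using sin_gt_zero[of "\<alpha> - \<xi>"] sin_minus[of "\<alpha> - \<xi>"] xi_bounds by simp

lemma y1_eq_0_iff: "0 \<le> \<alpha> \<Longrightarrow> \<alpha> < pi \<Longrightarrow> y1 \<alpha> = 0 \<longleftrightarrow> \<alpha> = \<xi>"
  using sin_xi_diff_pos[of \<alpha>] sin_xi_diff_neg[of \<alpha>] f_nz[of 0] sin_gt_zero[of \<xi>] xi_bounds
  by (cases \<alpha> \<xi> rule: linorder_cases) (auto simp: y1_eq_sin_xi_diff)

lemma y1_mult_y1: "y1 \<alpha> * y1 \<alpha>' = sin (\<xi> - \<alpha>) * sin (\<xi> - \<alpha>') / (f 0 * sin \<xi>)\<^sup>2"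
  by (simp add: y1_eq_sin_xi_diff power2_eq_square)

lemma Suc_N_minus_2: "Suc (N - 2) = N - 1" and Suc_N_minus_1: "Suc (N - Suc 0) = N"
  using N2 by simp_all

lemma sin_eq_0_iff_pi: "0 < \<beta> \<Longrightarrow> \<beta> \<le> pi \<Longrightarrow> sin \<beta> = 0 \<longleftrightarrow> \<beta> = pi"
  using sin_gt_zero[of \<beta>] by (cases "\<beta> = pi") auto

lemma degree_char_poly_S:
  assumes "0 \<le> \<alpha>" "\<alpha> < pi" "0 < \<beta>" "\<beta> \<le> pi"
  shows "degree (char_poly \<alpha> \<beta>) = (if \<alpha> \<noteq> \<xi> \<and> \<beta> \<noteq> pi then N else if \<alpha> = \<xi> \<and> \<beta> = pi then N - 2 else N - 1)"
  using degree_char_poly[of \<alpha> \<beta>] y1_eq_0_iff[OF assms(1,2)] sin_eq_0_iff_pi[OF assms(3,4)] by auto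

lemma lead_coeff_char_poly_beta:
  "sin \<beta> \<noteq> 0 \<Longrightarrow> lead_coeff (char_poly \<alpha> \<beta>) = sin \<beta> * lead_coeff (char_poly \<alpha> (pi / 2))"
  using lead_coeff_char_poly[of \<alpha> \<beta>] lead_coeff_char_poly[of \<alpha> "pi / 2"] char_poly_u(3) char_poly_v(3)
  by (simp split: if_splits)

abbreviation eig :: "real \<Rightarrow> real \<Rightarrow> nat \<Rightarrow> real" where
  "eig \<alpha> \<beta> n \<equiv> root_list (char_poly \<alpha> \<beta>) ! n"

lemma lead_coeff_char_poly_alpha_mult:
  assumes "y1 \<alpha> \<noteq> 0" "y1 \<alpha>' \<noteq> 0"
  shows "lead_coeff (char_poly \<alpha> \<beta>) * lead_coeff (char_poly \<alpha>' \<beta>) = (y1 \<alpha> * y1 \<alpha>') * (lead_coeff (char_poly_u \<beta>))\<^sup>2"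
    and "(lead_coeff (char_poly_u \<beta>))\<^sup>2 > 0"
proof -
  show "lead_coeff (char_poly \<alpha> \<beta>) * lead_coeff (char_poly \<alpha>' \<beta>) = (y1 \<alpha> * y1 \<alpha>') * (lead_coeff (char_poly_u \<beta>))\<^sup>2"
    using assms by (simp add: lead_coeff_char_poly power2_eq_square mult_ac)
  show "(lead_coeff (char_poly_u \<beta>))\<^sup>2 > 0" using char_poly_u(1)[of \<beta>] by simp
qed

lemma eig_alpha_same_side:
  assumes "0 \<le> \<alpha>" "\<alpha> < \<alpha>'" "\<alpha>' < pi" "\<alpha>' < \<xi> \<or> \<xi> < \<alpha>" and i: "i < degree (char_poly \<alpha> \<beta>)"
  shows "eig \<alpha>' \<beta> i < eig \<alpha> \<beta> i"
    and "Suc i < degree (char_poly \<alpha> \<beta>) \<Longrightarrow> eig \<alpha> \<beta> i < eig \<alpha>' \<beta> (Suc i)"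
proof -
  interpret positive_wronskian "char_poly \<alpha> \<beta>" "char_poly \<alpha>' \<beta>"
    using assms by (intro positive_wronskian_alpha sin_gt_zero) auto
  have "sin (\<xi> - \<alpha>) * sin (\<xi> - \<alpha>') > 0"
    using assms sin_xi_diff_pos sin_xi_diff_neg by (auto intro: mult_pos_pos mult_neg_neg)
  then have y1: "y1 \<alpha> * y1 \<alpha>' > 0"
    using f_nz[of 0] sin_gt_zero[of \<xi>] xi_bounds by (simp add: y1_mult_y1)
  then have "y1 \<alpha> \<noteq> 0" "y1 \<alpha>' \<noteq> 0" by auto
  then have "lead_coeff (char_poly \<alpha> \<beta>) * lead_coeff (char_poly \<alpha>' \<beta>) > 0"
    using lead_coeff_char_poly_alpha_mult[of \<alpha> \<alpha>' \<beta>] y1 by simp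
  moreover have "degree (char_poly \<alpha> \<beta>) = degree (char_poly \<alpha>' \<beta>)"
    using y1 by (auto simp: degree_char_poly)
  ultimately show "eig \<alpha>' \<beta> i < eig \<alpha> \<beta> i"
    and "Suc i < degree (char_poly \<alpha> \<beta>) \<Longrightarrow> eig \<alpha> \<beta> i < eig \<alpha>' \<beta> (Suc i)"
    using roots_interlace_same_degree[OF card_roots_char_poly card_roots_char_poly] i by auto
qed

lemma eig_alpha_across_xi:
  assumes "0 \<le> \<alpha>" "\<alpha> < \<xi>" "\<xi> < \<alpha>'" "\<alpha>' < pi" and i: "i < degree (char_poly \<alpha> \<beta>)"
  shows "eig \<alpha> \<beta> i < eig \<alpha>' \<beta> i"
    and "Suc i < degree (char_poly \<alpha> \<beta>) \<Longrightarrow> eig \<alpha>' \<beta> i < eig \<alpha> \<beta> (Suc i)"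
proof -
  interpret positive_wronskian "char_poly \<alpha> \<beta>" "char_poly \<alpha>' \<beta>"
    using assms by (intro positive_wronskian_alpha sin_gt_zero) auto
  have "sin (\<xi> - \<alpha>) * sin (\<xi> - \<alpha>') < 0"
    using assms sin_xi_diff_pos sin_xi_diff_neg by (auto intro: mult_pos_neg)
  then have y1: "y1 \<alpha> * y1 \<alpha>' < 0"
    using f_nz[of 0] sin_gt_zero[of \<xi>] xi_bounds by (simp add: y1_mult_y1 divide_neg_pos)
  then have "y1 \<alpha> \<noteq> 0" "y1 \<alpha>' \<noteq> 0" by auto
  then have "lead_coeff (char_poly \<alpha> \<beta>) * lead_coeff (char_poly \<alpha>' \<beta>) < 0"
    using lead_coeff_char_poly_alpha_mult[of \<alpha> \<alpha>' \<beta>] y1 by (simp add: mult_neg_pos)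
  moreover have "degree (char_poly \<alpha> \<beta>) = degree (char_poly \<alpha>' \<beta>)"
    using y1 by (auto simp: degree_char_poly)
  ultimately show "eig \<alpha> \<beta> i < eig \<alpha>' \<beta> i"
    and "Suc i < degree (char_poly \<alpha> \<beta>) \<Longrightarrow> eig \<alpha>' \<beta> i < eig \<alpha> \<beta> (Suc i)"
    using roots_interlace_same_degree'[OF card_roots_char_poly card_roots_char_poly] i by auto
qed

lemma eig_alpha_xi:
  assumes "0 \<le> \<alpha>" "\<alpha> < pi" "\<alpha> \<noteq> \<xi>" and i: "Suc i < degree (char_poly \<alpha> \<beta>)"
  shows "eig \<alpha> \<beta> i < eig \<xi> \<beta> i" and "eig \<xi> \<beta> i < eig \<alpha> \<beta> (Suc i)"
proof -
  have deg: "degree (char_poly \<alpha> \<beta>) = degree (char_poly \<xi> \<beta>) + 1"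
    using y1_eq_0_iff[OF assms(1,2)] y1_eq_0_iff[of \<xi>] xi_bounds assms(3)
    by (simp add: degree_char_poly Suc_N_minus_2 Suc_N_minus_1)
  note card = card_roots_char_poly[of \<alpha> \<beta>] card_roots_char_poly[of \<xi> \<beta>]
  have "eig \<alpha> \<beta> i < eig \<xi> \<beta> i \<and> eig \<xi> \<beta> i < eig \<alpha> \<beta> (Suc i)"
  proof (cases "\<alpha> < \<xi>")
    case True
    interpret positive_wronskian "char_poly \<alpha> \<beta>" "char_poly \<xi> \<beta>"
      using True assms xi_bounds by (intro positive_wronskian_alpha sin_gt_zero) auto
    show ?thesis using roots_interlace_Suc_degree card deg i by auto
  next
    case False
    interpret positive_wronskian "char_poly \<xi> \<beta>" "char_poly \<alpha> \<beta>"
      using False assms xi_bounds by (intro positive_wronskian_alpha sin_gt_zero) auto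
    show ?thesis using roots_interlace_Suc_degree' card deg i by auto
  qed
  then show "eig \<alpha> \<beta> i < eig \<xi> \<beta> i" "eig \<xi> \<beta> i < eig \<alpha> \<beta> (Suc i)" by simp_all
qed

lemma eig_beta_below_pi:
  assumes "0 < \<beta>" "\<beta> < \<beta>'" "\<beta>' < pi" and i: "i < degree (char_poly \<alpha> \<beta>)"
  shows "eig \<alpha> \<beta> i < eig \<alpha> \<beta>' i"
    and "Suc i < degree (char_poly \<alpha> \<beta>) \<Longrightarrow> eig \<alpha> \<beta>' i < eig \<alpha> \<beta> (Suc i)"
proof -
  interpret positive_wronskian "char_poly \<alpha> \<beta>'" "char_poly \<alpha> \<beta>"
    using assms by (intro positive_wronskian_beta sin_gt_zero) auto
  have sin: "sin \<beta> > 0" "sin \<beta>' > 0" using assms by (auto intro: sin_gt_zero)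
  have "lead_coeff (char_poly \<alpha> \<beta>') * lead_coeff (char_poly \<alpha> \<beta>)
      = (sin \<beta>' * sin \<beta>) * (lead_coeff (char_poly \<alpha> (pi / 2)))\<^sup>2"
    using lead_coeff_char_poly_beta[of \<beta>' \<alpha>] lead_coeff_char_poly_beta[of \<beta> \<alpha>] sin
    by (simp add: power2_eq_square mult_ac)
  moreover have "(lead_coeff (char_poly \<alpha> (pi / 2)))\<^sup>2 > 0" using char_poly_nonzero by simp
  ultimately have "lead_coeff (char_poly \<alpha> \<beta>') * lead_coeff (char_poly \<alpha> \<beta>) > 0"
    using sin by simp
  moreover have "degree (char_poly \<alpha> \<beta>') = degree (char_poly \<alpha> \<beta>)"
    using sin by (simp add: degree_char_poly)
  ultimately show "eig \<alpha> \<beta> i < eig \<alpha> \<beta>' i"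
    and "Suc i < degree (char_poly \<alpha> \<beta>) \<Longrightarrow> eig \<alpha> \<beta>' i < eig \<alpha> \<beta> (Suc i)"
    using roots_interlace_same_degree[OF card_roots_char_poly card_roots_char_poly] i by auto
qed

lemma eig_beta_pi:
  assumes "0 < \<beta>" "\<beta> < pi" and i: "Suc i < degree (char_poly \<alpha> \<beta>)"
  shows "eig \<alpha> \<beta> i < eig \<alpha> pi i" and "eig \<alpha> pi i < eig \<alpha> \<beta> (Suc i)"
proof -
  interpret positive_wronskian "char_poly \<alpha> pi" "char_poly \<alpha> \<beta>"
    using assms by (intro positive_wronskian_beta sin_gt_zero) auto
  have "degree (char_poly \<alpha> \<beta>) = degree (char_poly \<alpha> pi) + 1"
    using sin_gt_zero[OF assms(1,2)] by (simp add: degree_char_poly Suc_N_minus_2 Suc_N_minus_1)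
  then show "eig \<alpha> \<beta> i < eig \<alpha> pi i" "eig \<alpha> pi i < eig \<alpha> \<beta> (Suc i)"
    using roots_interlace_Suc_degree'[OF card_roots_char_poly card_roots_char_poly] i by auto
qed

lemma eig_alpha_chain:
  assumes a: "0 \<le> \<alpha>1" "\<alpha>1 < \<alpha>2" "\<alpha>2 < \<xi>" "\<xi> \<le> \<alpha>3" "\<alpha>3 < \<alpha>4" "\<alpha>4 < pi"
    and D: "D = degree (char_poly \<alpha>1 \<beta>)"
  shows "(\<forall>n. Suc n < D \<longrightarrow> eig \<alpha>2 \<beta> n < eig \<alpha>1 \<beta> n \<and> eig \<alpha>1 \<beta> n < eig \<alpha>4 \<beta> n \<and>
            eig \<alpha>4 \<beta> n < eig \<alpha>3 \<beta> n \<and> eig \<alpha>3 \<beta> n < eig \<alpha>2 \<beta> (Suc n)) \<and>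
         eig \<alpha>2 \<beta> (D - 1) < eig \<alpha>1 \<beta> (D - 1) \<and> eig \<alpha>1 \<beta> (D - 1) < eig \<alpha>4 \<beta> (D - 1) \<and>
         (\<alpha>3 \<noteq> \<xi> \<longrightarrow> eig \<alpha>4 \<beta> (D - 1) < eig \<alpha>3 \<beta> (D - 1))"
proof -
  have y1: "y1 \<alpha> \<noteq> 0" if "0 \<le> \<alpha>" "\<alpha> < pi" "\<alpha> \<noteq> \<xi>" for \<alpha>
    using y1_eq_0_iff that by blast
  have deg: "degree (char_poly \<alpha> \<beta>) = D" if "0 \<le> \<alpha>" "\<alpha> < pi" "\<alpha> \<noteq> \<xi>" for \<alpha>
    using y1[OF that] y1[of \<alpha>1] a D by (simp add: degree_char_poly)
  have "D \<noteq> 0" using D N2 y1[of \<alpha>1] a by (simp add: degree_char_poly)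
  have A: "eig \<alpha>2 \<beta> n < eig \<alpha>1 \<beta> n" "eig \<alpha>1 \<beta> n < eig \<alpha>4 \<beta> n" if "n < D" for n
    using eig_alpha_same_side(1)[of \<alpha>1 \<alpha>2] eig_alpha_across_xi(1)[of \<alpha>1 \<alpha>4] a D that by auto
  have C: "eig \<alpha>4 \<beta> n < eig \<alpha>3 \<beta> n" if "Suc n < D \<or> n < D \<and> \<alpha>3 \<noteq> \<xi>" for n
    using eig_alpha_xi(1)[where \<alpha> = \<alpha>4 and \<beta> = \<beta> and i = n] eig_alpha_same_side(1)[of \<alpha>3 \<alpha>4] deg[of \<alpha>4] deg[of \<alpha>3] a xi_bounds that
    by (cases "\<alpha>3 = \<xi>") auto
  have E: "eig \<alpha>3 \<beta> n < eig \<alpha>2 \<beta> (Suc n)" if "Suc n < D" for n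
    using eig_alpha_xi(2)[where \<alpha> = \<alpha>2 and \<beta> = \<beta> and i = n] eig_alpha_across_xi(2)[of \<alpha>2 \<alpha>3] deg[of \<alpha>2] a xi_bounds that
    by (cases "\<alpha>3 = \<xi>") auto
  show ?thesis using A C E \<open>D \<noteq> 0\<close> by auto
qed

lemma eig_beta_chain:
  assumes b: "0 < \<beta>1" "\<beta>1 < \<beta>2" "\<beta>2 \<le> pi" and D: "D = degree (char_poly \<alpha> \<beta>1)"
  shows "(\<forall>n. Suc n < D \<longrightarrow> eig \<alpha> \<beta>1 n < eig \<alpha> \<beta>2 n \<and> eig \<alpha> \<beta>2 n < eig \<alpha> \<beta>1 (Suc n)) \<and>
         (\<beta>2 \<noteq> pi \<longrightarrow> eig \<alpha> \<beta>1 (D - 1) < eig \<alpha> \<beta>2 (D - 1))"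
proof -
  have "sin \<beta>1 \<noteq> 0" using b sin_gt_zero[of \<beta>1] by simp
  then have "D \<noteq> 0" using D N2 by (simp add: degree_char_poly)
  then show ?thesis
    using eig_beta_pi[where \<beta> = \<beta>1 and \<alpha> = \<alpha>] eig_beta_below_pi[where \<beta> = \<beta>1 and \<beta>' = \<beta>2 and \<alpha> = \<alpha>] b D by (cases "\<beta>2 = pi") auto
qed

lemma sl_num_eigenvalues_S_formula:
  assumes "0 \<le> \<alpha>" "\<alpha> < pi" "0 < \<beta>" "\<beta> \<le> pi"
  shows "sl_num_eigenvalues_is f q w N (S_A \<alpha>) (S_B \<beta>)
    (if \<alpha> \<noteq> \<xi> \<and> \<beta> \<noteq> pi then N else if \<alpha> = \<xi> \<and> \<beta> = pi then N - 2 else N - 1)"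
  using sl_num_eigenvalues_S[of \<alpha> \<beta>] by (simp add: degree_char_poly_S[OF assms])

lemma eig_alpha_interlacing:
  assumes "0 \<le> \<alpha>1" "\<alpha>1 < \<alpha>2" "\<alpha>2 < \<xi>" "\<xi> \<le> \<alpha>3" "\<alpha>3 < \<alpha>4" "\<alpha>4 < pi" "0 < \<beta>" "\<beta> < pi"
  shows "(\<forall>n. Suc n < N \<longrightarrow> eig \<alpha>2 \<beta> n < eig \<alpha>1 \<beta> n \<and> eig \<alpha>1 \<beta> n < eig \<alpha>4 \<beta> n \<and>
            eig \<alpha>4 \<beta> n < eig \<alpha>3 \<beta> n \<and> eig \<alpha>3 \<beta> n < eig \<alpha>2 \<beta> (Suc n)) \<and>
         eig \<alpha>2 \<beta> (N - 1) < eig \<alpha>1 \<beta> (N - 1) \<and> eig \<alpha>1 \<beta> (N - 1) < eig \<alpha>4 \<beta> (N - 1) \<and>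
         (\<alpha>3 \<noteq> \<xi> \<longrightarrow> eig \<alpha>4 \<beta> (N - 1) < eig \<alpha>3 \<beta> (N - 1))"
  using assms by (intro eig_alpha_chain) (auto simp: degree_char_poly_S)

lemma eig_alpha_interlacing_pi:
  assumes "0 \<le> \<alpha>1" "\<alpha>1 < \<alpha>2" "\<alpha>2 < \<xi>" "\<xi> \<le> \<alpha>3" "\<alpha>3 < \<alpha>4" "\<alpha>4 < pi"
  shows "(\<forall>n. Suc n < N - 1 \<longrightarrow> eig \<alpha>2 pi n < eig \<alpha>1 pi n \<and> eig \<alpha>1 pi n < eig \<alpha>4 pi n \<and>
            eig \<alpha>4 pi n < eig \<alpha>3 pi n \<and> eig \<alpha>3 pi n < eig \<alpha>2 pi (Suc n)) \<and>
         eig \<alpha>2 pi (N - 2) < eig \<alpha>1 pi (N - 2) \<and> eig \<alpha>1 pi (N - 2) < eig \<alpha>4 pi (N - 2) \<and>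
         (\<alpha>3 \<noteq> \<xi> \<longrightarrow> eig \<alpha>4 pi (N - 2) < eig \<alpha>3 pi (N - 2))"
  using eig_alpha_chain[OF assms, of "N - 1" pi] assms by (simp add: degree_char_poly_S numeral_2_eq_2)

lemma eig_beta_interlacing:
  assumes "0 \<le> \<alpha>" "\<alpha> < pi" "\<alpha> \<noteq> \<xi>" "0 < \<beta>1" "\<beta>1 < \<beta>2" "\<beta>2 \<le> pi"
  shows "(\<forall>n. Suc n < N \<longrightarrow> eig \<alpha> \<beta>1 n < eig \<alpha> \<beta>2 n \<and> eig \<alpha> \<beta>2 n < eig \<alpha> \<beta>1 (Suc n)) \<and>
         (\<beta>2 \<noteq> pi \<longrightarrow> eig \<alpha> \<beta>1 (N - 1) < eig \<alpha> \<beta>2 (N - 1))"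
  using assms by (intro eig_beta_chain) (auto simp: degree_char_poly_S)

lemma eig_beta_interlacing_xi:
  assumes "0 < \<beta>1" "\<beta>1 < \<beta>2" "\<beta>2 \<le> pi"
  shows "(\<forall>n. Suc n < N - 1 \<longrightarrow> eig \<xi> \<beta>1 n < eig \<xi> \<beta>2 n \<and> eig \<xi> \<beta>2 n < eig \<xi> \<beta>1 (Suc n)) \<and>
         (\<beta>2 \<noteq> pi \<longrightarrow> eig \<xi> \<beta>1 (N - 2) < eig \<xi> \<beta>2 (N - 2))"
  using eig_beta_chain[OF assms, of "N - 1" \<xi>] assms xi_bounds by (simp add: degree_char_poly_S numeral_2_eq_2)

end

theorem theorem3p1:
  fixes f q w :: "nat \<Rightarrow> real" and N :: nat
  assumes N2: "N \<ge> 2"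
    and f_nz: "\<And>n. n \<le> N \<Longrightarrow> f n \<noteq> 0"
    and w_pos: "\<And>n. 1 \<le> n \<Longrightarrow> n \<le> N \<Longrightarrow> w n > 0"
  defines "\<xi> \<equiv> xi_of (f 0)"
    and "L \<equiv> (\<lambda>\<alpha> \<beta> n. sl_eig f q w N (S_A \<alpha>) (S_B \<beta>) n)"
  shows
    "(\<forall>\<alpha> \<beta>. 0 \<le> \<alpha> \<and> \<alpha> < pi \<and> 0 < \<beta> \<and> \<beta> \<le> pi \<longrightarrow>
        sl_num_eigenvalues_is f q w N (S_A \<alpha>) (S_B \<beta>)
          (if \<alpha> \<noteq> \<xi> \<and> \<beta> \<noteq> pi then N
           else if \<alpha> = \<xi> \<and> \<beta> = pi then N - 2 else N - 1))
   \<and> (\<forall>\<alpha>1 \<alpha>2 \<alpha>3 \<alpha>4 \<beta>1 \<beta>2.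
        0 \<le> \<alpha>1 \<and> \<alpha>1 < \<alpha>2 \<and> \<alpha>2 < \<xi> \<and> \<xi> \<le> \<alpha>3 \<and> \<alpha>3 < \<alpha>4 \<and> \<alpha>4 < pi \<and>
        0 < \<beta>1 \<and> \<beta>1 < \<beta>2 \<and> \<beta>2 \<le> pi \<longrightarrow>
        (\<forall>\<beta>0. 0 < \<beta>0 \<and> \<beta>0 < pi \<longrightarrow>
           (\<forall>n. n + 2 \<le> N \<longrightarrow>
              L \<alpha>2 \<beta>0 n < L \<alpha>1 \<beta>0 n \<and> L \<alpha>1 \<beta>0 n < L \<alpha>4 \<beta>0 n \<and>
              L \<alpha>4 \<beta>0 n < L \<alpha>3 \<beta>0 n \<and> L \<alpha>3 \<beta>0 n < L \<alpha>2 \<beta>0 (n + 1)) \<and>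
           L \<alpha>2 \<beta>0 (N - 1) < L \<alpha>1 \<beta>0 (N - 1) \<and> L \<alpha>1 \<beta>0 (N - 1) < L \<alpha>4 \<beta>0 (N - 1) \<and>
           (\<alpha>3 \<noteq> \<xi> \<longrightarrow> L \<alpha>4 \<beta>0 (N - 1) < L \<alpha>3 \<beta>0 (N - 1))) \<and>
        ((\<forall>n. n + 3 \<le> N \<longrightarrow>
              L \<alpha>2 pi n < L \<alpha>1 pi n \<and> L \<alpha>1 pi n < L \<alpha>4 pi n \<and>
              L \<alpha>4 pi n < L \<alpha>3 pi n \<and> L \<alpha>3 pi n < L \<alpha>2 pi (n + 1)) \<and>
           L \<alpha>2 pi (N - 2) < L \<alpha>1 pi (N - 2) \<and> L \<alpha>1 pi (N - 2) < L \<alpha>4 pi (N - 2) \<and>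
           (\<alpha>3 \<noteq> \<xi> \<longrightarrow> L \<alpha>4 pi (N - 2) < L \<alpha>3 pi (N - 2))) \<and>
        (\<forall>\<alpha>0. 0 \<le> \<alpha>0 \<and> \<alpha>0 < pi \<and> \<alpha>0 \<noteq> \<xi> \<longrightarrow>
           (\<forall>n. n + 2 \<le> N \<longrightarrow>
              L \<alpha>0 \<beta>1 n < L \<alpha>0 \<beta>2 n \<and> L \<alpha>0 \<beta>2 n < L \<alpha>0 \<beta>1 (n + 1)) \<and>
           (\<beta>2 \<noteq> pi \<longrightarrow> L \<alpha>0 \<beta>1 (N - 1) < L \<alpha>0 \<beta>2 (N - 1))) \<and>
        ((\<forall>n. n + 3 \<le> N \<longrightarrow>
              L \<xi> \<beta>1 n < L \<xi> \<beta>2 n \<and> L \<xi> \<beta>2 n < L \<xi> \<beta>1 (n + 1)) \<and>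
           (\<beta>2 \<noteq> pi \<longrightarrow> L \<xi> \<beta>1 (N - 2) < L \<xi> \<beta>2 (N - 2))))"
proof -
  interpret sturm_liouville f q w N using assms(1-3) by unfold_locales
  have L: "L = (\<lambda>\<alpha> \<beta> n. eig \<alpha> \<beta> n)" by (simp add: assms(5) sl_eig_S)
  have idx: "n + 2 \<le> N \<longleftrightarrow> Suc n < N" "n + 3 \<le> N \<longleftrightarrow> Suc n < N - 1" "n + 1 = Suc n" for n
    by auto
  show ?thesis
    unfolding L assms(4) idx
  proof ((rule conjI; intro allI impI; (elim conjE)?), goal_cases)
    case (1 \<alpha> \<beta>)
    then show ?case by (rule sl_num_eigenvalues_S_formula)
  next
    case (2 \<alpha>1 \<alpha>2 \<alpha>3 \<alpha>4 \<beta>1 \<beta>2)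
    show ?case
      using eig_alpha_interlacing[OF "2"(1-6)] eig_alpha_interlacing_pi[OF "2"(1-6)]
        eig_beta_interlacing[OF _ _ _ "2"(7-9)] eig_beta_interlacing_xi[OF "2"(7-9)]
      by blast
  qed
qed

end
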